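(* Let $d\geq 2$ and let $\varGamma$ be a lattice in $\mathbb{R}^d$. Then $\operatorname{SOC}(\varGamma)$ is a normal subgroup of $\operatorname{SOS}(\varGamma)$, the factor group $\operatorname{SOS}(\varGamma)/\operatorname{SOC}(\varGamma)$ is countable, and it is the direct sum of cyclic groups of prime power orders that divide $d$.
   Context: A lattice in $\mathbb{R}^d$ is a subgroup of the form $\mathbb{Z}b_1\oplus\cdots\oplus\mathbb{Z}b_d$ where $\{b_1,\dots,b_d\}$ is a basis of $\mathbb{R}^d$. Two lattices $\varGamma,\varGamma'$ are commensurate, written $\varGamma\sim\varGamma'$, if $\varGamma\cap\varGamma'$ has finite index both in $\varGamma$ and in $\varGamma'$. $\operatorname{SOC}(\varGamma)=\{R\in\operatorname{SO}(d):\varGamma\sim R\varGamma\}$ is the group of coincidence rotations and $\operatorname{SOS}(\varGamma)=\{R\in\operatorname{SO}(d):\varGamma\sim\alpha R\varGamma\text{ for some }\alpha>0\}$ is the group of similarity rotations; both are subgroups of $\operatorname{SO}(d)$ and $\operatorname{SOC}(\varGamma)\subset\operatorname{SOS}(\varGamma)$. *)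

theory Defs
  imports "HOL-Analysis.Analysis" "HOL-Algebra.Product_Groups" "HOL-Algebra.Elementary_Groups"
    "HOL-Computational_Algebra.Primes"
begin

definition is_lattice :: "(real^'n) set \<Rightarrow> bool" where
  "is_lattice L \<longleftrightarrow> (\<exists>b :: 'n \<Rightarrow> real^'n. inj b \<and> independent (range b) \<and>
       L = range (\<lambda>k :: 'n \<Rightarrow> int. \<Sum>i\<in>UNIV. of_int (k i) *\<^sub>R b i))"

definition finite_index :: "(real^'n) set \<Rightarrow> (real^'n) set \<Rightarrow> bool" where
  "finite_index H G \<longleftrightarrow> finite ((\<lambda>x. (\<lambda>h. x + h) ` H) ` G)"

definition commensurate :: "(real^'n) set \<Rightarrow> (real^'n) set \<Rightarrow> bool" where
  "commensurate L L' \<longleftrightarrow> finite_index (L \<inter> L') L \<and> finite_index (L \<inter> L') L'"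

definition SO_set :: "(real^'n^'n) set" where
  "SO_set = {R. orthogonal_matrix R \<and> det R = 1}"

definition SOC :: "(real^'n) set \<Rightarrow> (real^'n^'n) set" where
  "SOC L = {R \<in> SO_set. commensurate L ((\<lambda>x. R *v x) ` L)}"

definition SOS :: "(real^'n) set \<Rightarrow> (real^'n^'n) set" where
  "SOS L = {R \<in> SO_set. \<exists>\<alpha>::real. \<alpha> > 0 \<and> commensurate L ((\<lambda>x. \<alpha> *\<^sub>R (R *v x)) ` L)}"

definition SO_group :: "(real^'n^'n) monoid" where
  "SO_group = \<lparr>carrier = SO_set, monoid.mult = (**), one = mat 1\<rparr>"

definition SO_subgroup :: "(real^'n^'n) set \<Rightarrow> (real^'n^'n) monoid" where
  "SO_subgroup S = \<lparr>carrier = S, monoid.mult = (**), one = mat 1\<rparr>"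

end

theory Submission
  imports Defs "HOL-Algebra.Multiplicative_Group" "HOL-Algebra.Free_Abelian_Groups"
    "HOL-Number_Theory.Cong" "HOL-Number_Theory.Prime_Powers"
begin

text \<open>
  Write the lattice as \<open>L = \<int>b\<^sub>1 + \<dots> + \<int>b\<^sub>d\<close> and let \<open>V = \<rat>b\<^sub>1 + \<dots> + \<rat>b\<^sub>d\<close>.
  Two such lattices are commensurate iff they span the same rational space, so \<open>SOC(L)\<close>
  consists of the rotations mapping \<open>V\<close> onto itself and \<open>SOS(L)\<close> of the rotations \<open>R\<close> for which
  some multiple \<open>\<alpha>R\<close> does. Conjugates and commutators of elements of \<open>SOS(L)\<close> then lie in
  \<open>SOC(L)\<close> because the scalars cancel, and so do \<open>d\<close>-th powers because \<open>\<alpha>\<^sup>d = det (\<alpha>R)\<close> is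
  rational. Hence \<open>SOS(L)/SOC(L)\<close> is abelian of exponent \<open>d\<close>; it is countable because \<open>\<alpha>R\<close> has a
  rational matrix with respect to the basis, which determines \<open>R\<close>.

  By Pruefer's theorem an abelian group of exponent \<open>d\<close> has an independent generating set of
  elements of prime power orders dividing \<open>d\<close>. By induction on \<open>d\<close>: for a prime \<open>p\<close> dividing \<open>d\<close>,
  take \<open>p\<close>-th roots of such a set for the subgroup of \<open>p\<close>-th powers and complete them by a
  maximal set (Zorn) of elements of order \<open>p\<close> that is independent modulo their span.
\<close>

section \<open>Abelian groups of bounded exponent\<close>

lemma Zorn_finite_character:
  assumes character: "\<And>Z. P Z \<longleftrightarrow> (\<forall>F. finite F \<longrightarrow> F \<subseteq> Z \<longrightarrow> P F)" and "P {}"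
  shows "\<exists>M. P M \<and> (\<forall>X. P X \<longrightarrow> M \<subseteq> X \<longrightarrow> X = M)"
proof -
  have "\<Union>C \<in> {Z. P Z}" if C: "C \<in> chains {Z. P Z}" for C
  proof (cases "C = {}")
    case True
    then show ?thesis using \<open>P {}\<close> by simp
  next
    case False
    have "P F" if F: "finite F" "F \<subseteq> \<Union>C" for F
    proof -
      have "subset.chain {Z. P Z} C" using C by (simp add: chains_alt_def)
      then obtain B where "B \<in> C" "F \<subseteq> B"
        using finite_subset_Union_chain[OF F False] by blast
      moreover have "P B" using C \<open>B \<in> C\<close> by (auto simp: chains_def)
      ultimately show ?thesis using character[of B] F(1) by blast
    qed
    then have "P (\<Union>C)" using character[of "\<Union>C"] by blast
    then show ?thesis by simp
  qed
  then show ?thesis using Zorn_Lemma[of "{Z. P Z}"] by blast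
qed

lemma (in monoid) nat_pow_swap: "x \<in> carrier G \<Longrightarrow> (x [^] (a::nat)) [^] (b::nat) = (x [^] b) [^] a"
  by (simp add: nat_pow_pow mult.commute)

lemma (in monoid) nat_pow_mod:
  assumes "x \<in> carrier G" "x [^] (k::nat) = \<one>" shows "x [^] (n mod k) = x [^] n"
proof -
  have "x [^] n = x [^] (k * (n div k)) \<otimes> x [^] (n mod k)"
    using assms by (simp add: nat_pow_mult)
  then show ?thesis using assms by (simp add: nat_pow_pow[symmetric])
qed

lemma (in group) inv_eq_nat_pow_pred:
  assumes "x \<in> carrier G" "x [^] (d::nat) = \<one>" "0 < d"
  shows "inv x = x [^] (d - 1)"
proof -
  have "x [^] (d - 1) \<otimes> x = \<one>" using assms by (metis Suc_diff_1 nat_pow_Suc)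
  then show ?thesis using assms(1) by (intro inv_equality) auto
qed

lemma (in group) subgroup_nat_pow_closed: "subgroup H G \<Longrightarrow> x \<in> H \<Longrightarrow> x [^] (n::nat) \<in> H"
  by (induction n) (auto simp: subgroup.one_closed subgroup.m_closed)

context comm_group
begin

lemma nat_pow_hom: "(\<lambda>x. x [^] (n::nat)) \<in> hom G G"
  by (rule homI) (simp_all add: nat_pow_distrib)

lemma subgroup_nat_pow_image: "subgroup H G \<Longrightarrow> subgroup ((\<lambda>x. x [^] (n::nat)) ` H) G"
  using group_hom.subgroup_img_is_subgroup[of G G] nat_pow_hom
  by (simp add: group_hom_def group_hom_axioms_def is_group)

lemma subgroup_nat_pow_kernel:
  assumes "subgroup H G" shows "subgroup {x \<in> H. x [^] (n::nat) = \<one>} G"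
proof -
  have "subgroup (kernel G G (\<lambda>x. x [^] n)) G"
    using group_hom.subgroup_kernel[of G G] nat_pow_hom
    by (simp add: group_hom_def group_hom_axioms_def is_group)
  then have "subgroup (H \<inter> kernel G G (\<lambda>x. x [^] n)) G"
    using assms by (rule subgroups_Inter_pair[rotated])
  moreover have "H \<inter> kernel G G (\<lambda>x. x [^] n) = {x \<in> H. x [^] n = \<one>}"
    using subgroup.subset[OF assms] by (auto simp: kernel_def)
  ultimately show ?thesis by simp
qed

lemma subgroup_finprod_closed:
  assumes "subgroup H G" "\<And>s. s \<in> F \<Longrightarrow> f s \<in> H"
  shows "finprod G f F \<in> H"
proof (cases "finite F")
  case True
  then show ?thesis using assms(2)
  proof (induction F rule: finite_induct)
    case (insert y F)
    have "H \<subseteq> carrier G" using assms(1) subgroup.subset by blast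
    with insert show ?case using subgroup.m_closed[OF assms(1)]
      by (subst finprod_insert) (auto simp: Pi_def subset_eq)
  qed (simp add: subgroup.one_closed[OF assms(1)])
qed (simp add: subgroup.one_closed[OF assms(1)])

lemma finprod_nat_pow:
  assumes "f \<in> F \<rightarrow> carrier G"
  shows "(finprod G f F) [^] (n::nat) = finprod G (\<lambda>s. f s [^] n) F"
proof (cases "finite F")
  case True
  then show ?thesis using assms
    by (induction F rule: finite_induct) (simp_all add: nat_pow_distrib Pi_def)
qed simp

text \<open>Exponents are natural numbers: in the torsion groups considered here \<open>pow_span S\<close> is the
  subgroup generated by \<open>S\<close>. \<open>indep_mod K S\<close> says that every relation among elements of \<open>S\<close> whose
  value lies in \<open>K\<close> is trivial.\<close>

definition pow_span :: "'a set \<Rightarrow> 'a set" where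
  "pow_span S = {finprod G (\<lambda>s. s [^] (c s :: nat)) F | F c. finite F \<and> F \<subseteq> S}"

definition indep_mod :: "'a set \<Rightarrow> 'a set \<Rightarrow> bool" where
  "indep_mod K S \<longleftrightarrow> (\<forall>F c. finite F \<longrightarrow> F \<subseteq> S \<longrightarrow> finprod G (\<lambda>s. s [^] (c s :: nat)) F \<in> K
      \<longrightarrow> (\<forall>s\<in>F. s [^] c s = \<one>))"

abbreviation indep :: "'a set \<Rightarrow> bool" where
  "indep S \<equiv> indep_mod {\<one>} S"

lemma indepD:
  "indep S \<Longrightarrow> finite F \<Longrightarrow> F \<subseteq> S \<Longrightarrow> finprod G (\<lambda>s. s [^] (c s :: nat)) F = \<one> \<Longrightarrow> s \<in> F
    \<Longrightarrow> s [^] c s = \<one>"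
  unfolding indep_mod_def by blast

lemma indep_mod_finite_character:
  "indep_mod K Z \<longleftrightarrow> (\<forall>F. finite F \<longrightarrow> F \<subseteq> Z \<longrightarrow> indep_mod K F)"
proof
  show "indep_mod K Z \<Longrightarrow> \<forall>F. finite F \<longrightarrow> F \<subseteq> Z \<longrightarrow> indep_mod K F"
    unfolding indep_mod_def by (meson finite_subset order_trans)
  show "\<forall>F. finite F \<longrightarrow> F \<subseteq> Z \<longrightarrow> indep_mod K F \<Longrightarrow> indep_mod K Z"
    unfolding indep_mod_def by (meson order_refl)
qed

lemma pow_span_memI: "finite F \<Longrightarrow> F \<subseteq> S \<Longrightarrow> finprod G (\<lambda>s. s [^] (c s :: nat)) F \<in> pow_span S"
  unfolding pow_span_def by blast

lemma pow_span_subset_carrier: "S \<subseteq> carrier G \<Longrightarrow> pow_span S \<subseteq> carrier G"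
  unfolding pow_span_def by (auto intro!: finprod_closed)

lemma one_in_pow_span: "\<one> \<in> pow_span S"
  using pow_span_memI[of "{}" S] by simp

lemma pow_span_inc: "S \<subseteq> carrier G \<Longrightarrow> s \<in> S \<Longrightarrow> s \<in> pow_span S"
  using pow_span_memI[of "{s}" S "\<lambda>_. 1"] by auto

lemma pow_span_mono: "A \<subseteq> B \<Longrightarrow> pow_span A \<subseteq> pow_span B"
  unfolding pow_span_def by blast

lemma pow_span_mult:
  assumes S: "S \<subseteq> carrier G" and "x \<in> pow_span S" "y \<in> pow_span S"
  shows "x \<otimes> y \<in> pow_span S"
proof -
  obtain F1 c1 where F1: "finite F1" "F1 \<subseteq> S" "x = finprod G (\<lambda>s. s [^] (c1 s :: nat)) F1"
    using assms(2) unfolding pow_span_def by blast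
  obtain F2 c2 where F2: "finite F2" "F2 \<subseteq> S" "y = finprod G (\<lambda>s. s [^] (c2 s :: nat)) F2"
    using assms(3) unfolding pow_span_def by blast
  define F where "F = F1 \<union> F2"
  define d1 where "d1 s = (if s \<in> F1 then c1 s else 0)" for s
  define d2 where "d2 s = (if s \<in> F2 then c2 s else 0)" for s
  have FS: "F \<subseteq> carrier G" "finite F" using F1 F2 S by (auto simp: F_def)
  have "x = finprod G (\<lambda>s. s [^] d1 s) F"
    unfolding F1(3) using FS by (intro finprod_mono_neutral_cong_left) (auto simp: F_def d1_def)
  moreover have "y = finprod G (\<lambda>s. s [^] d2 s) F"
    unfolding F2(3) using FS by (intro finprod_mono_neutral_cong_left) (auto simp: F_def d2_def)
  ultimately have "x \<otimes> y = finprod G (\<lambda>s. s [^] d1 s \<otimes> s [^] d2 s) F"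
    using FS by (simp add: finprod_multf Pi_def subset_eq)
  also have "\<dots> = finprod G (\<lambda>s. s [^] (d1 s + d2 s)) F"
    using FS by (intro finprod_cong) (auto simp: nat_pow_mult subset_eq)
  finally show ?thesis using FS F1 F2 pow_span_memI[of F S "\<lambda>s. d1 s + d2 s"] by (auto simp: F_def)
qed

lemma pow_span_nat_pow:
  assumes S: "S \<subseteq> carrier G" and "x \<in> pow_span S"
  shows "x [^] (n::nat) \<in> pow_span S"
proof -
  obtain F c where F: "finite F" "F \<subseteq> S" "x = finprod G (\<lambda>s. s [^] (c s :: nat)) F"
    using assms(2) unfolding pow_span_def by blast
  have "x [^] n = finprod G (\<lambda>s. (s [^] c s) [^] n) F"
    unfolding F(3) using F S by (intro finprod_nat_pow) auto
  also have "\<dots> = finprod G (\<lambda>s. s [^] (c s * n)) F"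
    using F S by (intro finprod_cong) (auto simp: nat_pow_pow subset_eq)
  finally show ?thesis using pow_span_memI[OF F(1,2)] by simp
qed

lemma pow_span_finprod:
  assumes S: "S \<subseteq> carrier G" and "finite F" "\<And>s. s \<in> F \<Longrightarrow> f s \<in> pow_span S"
  shows "finprod G f F \<in> pow_span S"
  using assms(2,3)
proof (induction F rule: finite_induct)
  case (insert x F)
  then have "f \<in> F \<rightarrow> carrier G" "f x \<in> carrier G"
    using pow_span_subset_carrier[OF S] by auto
  with insert show ?case using pow_span_mult[OF S] by simp
qed (simp add: one_in_pow_span)

lemma pow_span_subset_pow_span:
  assumes B: "B \<subseteq> carrier G" and "A \<subseteq> pow_span B"
  shows "pow_span A \<subseteq> pow_span B"
proof
  fix x assume "x \<in> pow_span A"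
  then obtain F c where F: "finite F" "F \<subseteq> A" "x = finprod G (\<lambda>s. s [^] (c s :: nat)) F"
    unfolding pow_span_def by blast
  show "x \<in> pow_span B" unfolding F(3)
    using F assms by (intro pow_span_finprod[OF B]) (auto intro: pow_span_nat_pow[OF B])
qed

lemma pow_span_subset_subgroup: "subgroup H G \<Longrightarrow> S \<subseteq> H \<Longrightarrow> pow_span S \<subseteq> H"
  unfolding pow_span_def
  by (auto intro!: subgroup_finprod_closed subgroup_nat_pow_closed)

lemma inv_in_pow_span:
  assumes "S \<subseteq> carrier G" "x \<in> pow_span S" "x [^] (d::nat) = \<one>" "0 < d"
  shows "inv x \<in> pow_span S"
proof -
  have "x \<in> carrier G" using assms(1,2) pow_span_subset_carrier by blast
  then show ?thesis using assms inv_eq_nat_pow_pred[of x d] pow_span_nat_pow by simp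
qed


lemma mem_pow_span_if_nat_pow_mem:
  fixes p :: nat
  assumes S: "S \<subseteq> carrier G" and p: "prime p" and w: "w \<in> carrier G" "w [^] p = \<one>"
    and c: "w [^] (c::nat) \<in> pow_span S" "w [^] c \<noteq> \<one>"
  shows "w \<in> pow_span S"
proof -
  have "\<not> p dvd c"
  proof
    assume "p dvd c"
    then obtain j where "c = p * j" by blast
    then show False using c(2) w by (simp add: nat_pow_pow[symmetric])
  qed
  then have "coprime c p" using p by (metis coprime_commute prime_imp_coprime)
  then obtain v where v: "[c * v = 1] (mod p)" using cong_solve_coprime_nat by auto
  have "(w [^] c) [^] v = w [^] ((c * v) mod p)" using w by (simp add: nat_pow_pow nat_pow_mod)
  also have "(c * v) mod p = 1" using v prime_gt_1_nat[OF p] by (simp add: cong_def)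
  finally show ?thesis using pow_span_nat_pow[OF S c(1), of v] w by simp
qed

lemma indep_mod_insert:
  fixes p :: nat
  assumes W: "subgroup W G" and p: "prime p" and exp: "\<And>x. x \<in> W \<Longrightarrow> x [^] p = \<one>"
    and KZ: "K \<subseteq> W" "Z \<subseteq> W" and indep: "indep_mod K Z"
    and w: "w \<in> W" "w \<notin> pow_span (K \<union> Z)"
  shows "indep_mod K (insert w Z)"
  unfolding indep_mod_def
proof (intro allI impI)
  fix F c assume F: "finite F" "F \<subseteq> insert w Z" and prod: "finprod G (\<lambda>s. s [^] (c s :: nat)) F \<in> K"
  have Wc: "W \<subseteq> carrier G" using W subgroup.subset by blast
  then have KZc: "K \<union> Z \<subseteq> carrier G" and wc: "w \<in> carrier G" using KZ w by auto
  define y where "y = finprod G (\<lambda>s. s [^] c s) (F - {w})"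
  have yW: "y \<in> W"
    unfolding y_def using F KZ by (intro subgroup_finprod_closed[OF W] subgroup_nat_pow_closed[OF W]) auto
  have y_span: "y \<in> pow_span (K \<union> Z)" unfolding y_def using F by (intro pow_span_memI) auto
  have split: "finprod G (\<lambda>s. s [^] c s) F = w [^] c w \<otimes> y" if "w \<in> F"
  proof -
    have "finprod G (\<lambda>s. s [^] c s) (insert w (F - {w})) = w [^] c w \<otimes> y"
      unfolding y_def using F KZ Wc wc by (subst finprod_insert) (auto simp: Pi_def subset_eq)
    then show ?thesis using that by (simp add: insert_absorb)
  qed
  show "\<forall>s\<in>F. s [^] c s = \<one>"
  proof (cases "w \<in> F \<longrightarrow> w [^] c w = \<one>")
    case True
    then have "finprod G (\<lambda>s. s [^] c s) (F - {w}) \<in> K"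
      using split prod yW Wc by (cases "w \<in> F") (auto simp: y_def subset_eq)
    moreover have "F - {w} \<subseteq> Z" using F(2) by blast
    ultimately have "\<forall>s\<in>F - {w}. s [^] c s = \<one>"
      using indep[unfolded indep_mod_def] F(1) by blast
    then show ?thesis using True by blast
  next
    case False
    then have "w [^] c w = finprod G (\<lambda>s. s [^] c s) F \<otimes> inv y"
      using split yW Wc wc by (simp add: m_assoc subset_eq)
    moreover have "inv y \<in> pow_span (K \<union> Z)"
      using inv_in_pow_span[OF KZc y_span exp[OF yW]] prime_gt_0_nat[OF p] by blast
    ultimately have "w [^] c w \<in> pow_span (K \<union> Z)"
      using prod pow_span_inc[OF KZc] pow_span_mult[OF KZc] by auto
    then show ?thesis using mem_pow_span_if_nat_pow_mem[OF KZc p wc exp[OF w(1)]] False w(2) by blast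
  qed
qed

lemma exists_indep_mod_complement:
  fixes p :: nat
  assumes W: "subgroup W G" and p: "prime p" and exp: "\<And>x. x \<in> W \<Longrightarrow> x [^] p = \<one>"
    and K: "K \<subseteq> W"
  shows "\<exists>Z \<subseteq> W - {\<one>}. indep_mod K Z \<and> W \<subseteq> pow_span (K \<union> Z)"
proof -
  define P where "P Z \<longleftrightarrow> Z \<subseteq> W - {\<one>} \<and> indep_mod K Z" for Z
  have "P Z \<longleftrightarrow> (\<forall>F. finite F \<longrightarrow> F \<subseteq> Z \<longrightarrow> P F)" for Z
  proof -
    have "Z \<subseteq> W - {\<one>} \<longleftrightarrow> (\<forall>F. finite F \<longrightarrow> F \<subseteq> Z \<longrightarrow> F \<subseteq> W - {\<one>})"
    proof (intro iffI allI impI subsetI)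
      fix x assume "\<forall>F. finite F \<longrightarrow> F \<subseteq> Z \<longrightarrow> F \<subseteq> W - {\<one>}" "x \<in> Z"
      then show "x \<in> W - {\<one>}" using finite.insertI[OF finite.emptyI, of x] by blast
    qed auto
    then show ?thesis unfolding P_def by (subst indep_mod_finite_character) auto
  qed
  moreover have "P {}" by (simp add: P_def indep_mod_def)
  ultimately obtain Z where Z: "P Z" and max: "\<And>X. P X \<Longrightarrow> Z \<subseteq> X \<Longrightarrow> X = Z"
    using Zorn_finite_character[of P] by blast
  have "W \<subseteq> pow_span (K \<union> Z)"
  proof
    fix w assume w: "w \<in> W"
    show "w \<in> pow_span (K \<union> Z)"
    proof (rule ccontr)
      assume w_notin: "w \<notin> pow_span (K \<union> Z)"
      have "K \<union> Z \<subseteq> carrier G" using K Z subgroup.subset[OF W] by (auto simp: P_def)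
      then have "w \<noteq> \<one>" "w \<notin> Z"
        using w_notin one_in_pow_span pow_span_inc[of "K \<union> Z"] by auto
      moreover have "indep_mod K (insert w Z)"
        using indep_mod_insert[OF W p exp K _ _ w w_notin] Z by (auto simp: P_def)
      ultimately have "P (insert w Z)" using Z w by (auto simp: P_def)
      then show False using max[of "insert w Z"] \<open>w \<notin> Z\<close> by blast
    qed
  qed
  then show ?thesis using Z by (auto simp: P_def)
qed


lemma indep_image_of_roots:
  fixes p :: nat
  assumes T: "T \<subseteq> carrier G" "indep T" and h: "h \<in> T \<rightarrow> carrier G"
    and root: "\<And>t. t \<in> T \<Longrightarrow> h t [^] p = t"
    and ord_coprime: "\<And>t. t \<in> T \<Longrightarrow> \<not> p dvd ord t \<Longrightarrow> ord (h t) = ord t"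
  shows "indep (h ` T)"
  unfolding indep_mod_def
proof (intro allI impI)
  fix F c assume F: "finite F" "F \<subseteq> h ` T" and rel: "finprod G (\<lambda>s. s [^] (c s :: nat)) F \<in> {\<one>}"
  have inj: "inj_on h T" by (rule inj_on_inverseI[where g = "\<lambda>x. x [^] p"]) (rule root)
  obtain B where B: "B \<subseteq> T" "F = h ` B" using F(2) subset_imageE by blast
  have finB: "finite B" using F(1) B inj by (metis finite_imageD inj_on_subset)
  have Bc: "B \<subseteq> carrier G" and hB: "h \<in> B \<rightarrow> carrier G" using B T h by auto
  define e where "e t = c (h t)" for t
  have "inj_on h B" using inj B(1) inj_on_subset by blast
  then have "finprod G (\<lambda>s. s [^] c s) (h ` B) = finprod G (\<lambda>t. h t [^] e t) B"
    using hB by (subst finprod_reindex) (auto simp: e_def)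
  then have rel_B: "finprod G (\<lambda>t. h t [^] e t) B = \<one>" using rel B(2) by simp
  have "(h t [^] e t) [^] p = t [^] e t" if "t \<in> B" for t
  proof -
    have t: "t \<in> T" "h t \<in> carrier G" using that B hB by auto
    have "(h t [^] e t) [^] p = (h t [^] p) [^] e t" by (rule nat_pow_swap[OF t(2)])
    then show ?thesis by (simp only: root[OF t(1)])
  qed
  then have "finprod G (\<lambda>t. t [^] e t) B = finprod G (\<lambda>t. (h t [^] e t) [^] p) B"
    using Bc by (intro finprod_cong) (auto simp: Pi_def)
  also have "\<dots> = \<one>" using rel_B hB by (simp flip: finprod_nat_pow add: Pi_def)
  finally have "t [^] e t = \<one>" if "t \<in> B" for t using indepD[OF T(2) finB B(1)] that by blast
  then have ord_dvd: "ord t dvd e t" if "t \<in> B" for t using that Bc pow_eq_id by blast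
  \<comment> \<open>raising the relation to the \<open>p\<close>-th power made it a relation in \<open>T\<close>; now each factor is a power of \<open>t\<close>\<close>
  define e' where "e' t = (if p dvd ord t then ord t div p * (e t div ord t) else 0)" for t
  have h_pow: "h t [^] e t = t [^] e' t" if t: "t \<in> B" for t
  proof (cases "p dvd ord t")
    case True
    have "e t = p * e' t" using True ord_dvd[OF t] by (auto simp: e'_def elim!: dvdE)
    then show ?thesis using t root B hB by (simp add: nat_pow_pow[symmetric] subset_eq Pi_def)
  next
    case False
    then show ?thesis using t ord_dvd[OF t] ord_coprime B hB pow_eq_id by (auto simp: e'_def Pi_def)
  qed
  have "finprod G (\<lambda>t. t [^] e' t) B = \<one>"
    using rel_B h_pow Bc hB by (simp cong: finprod_cong add: Pi_def subset_eq)
  then have "t [^] e' t = \<one>" if "t \<in> B" for t using indepD[OF T(2) finB B(1)] that by blast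
  then show "\<forall>s\<in>F. s [^] c s = \<one>" using h_pow B(2) by (auto simp: e_def)
qed

lemma exists_pth_root_same_ord:
  fixes p :: nat
  assumes x: "x \<in> carrier G" "0 < ord x" "coprime p (ord x)"
  shows "\<exists>u::nat. (x [^] u) [^] p = x \<and> ord (x [^] u) = ord x"
proof -
  obtain u where u: "[p * u = 1] (mod ord x)" using cong_solve_coprime_nat[OF x(3)] by (metis One_nat_def)
  have "x [^] (1 mod ord x) = x"
  proof (cases "ord x = 1")
    case True
    then show ?thesis using ord_eq_1[OF x(1)] by simp
  next
    case False
    then show ?thesis using x by simp
  qed
  moreover have "(x [^] u) [^] p = x [^] ((p * u) mod ord x)"
    using x(1) by (simp add: nat_pow_pow nat_pow_mod mult.commute)
  ultimately have root: "(x [^] u) [^] p = x" using u by (simp add: cong_def)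
  have "(x [^] u) [^] ord x = (x [^] ord x) [^] u" using x(1) by (rule nat_pow_swap)
  then have "ord (x [^] u) dvd ord x" using x(1) pow_eq_id[of "x [^] u"] by simp
  have "((x [^] u) [^] p) [^] ord (x [^] u) = ((x [^] u) [^] ord (x [^] u)) [^] p"
    using x(1) by (intro nat_pow_swap) simp
  then have "ord x dvd ord (x [^] u)" using x(1) pow_eq_id[of x] by (simp only: root) simp
  with \<open>ord (x [^] u) dvd ord x\<close> show ?thesis using root dvd_antisym by blast
qed

lemma ord_pth_root_dvd:
  fixes p :: nat
  assumes "y \<in> carrier G" "y [^] p = t" shows "ord y dvd p * ord t"
proof -
  have "y [^] (p * ord t) = t [^] ord t" using assms by (simp add: nat_pow_pow[symmetric])
  also have "\<dots> = \<one>" using assms by (metis nat_pow_closed pow_ord_eq_1)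
  finally show ?thesis using pow_eq_id assms(1) by blast
qed

lemma primepow_ord_pth_root:
  fixes p :: nat
  assumes p: "prime p" and y: "y \<in> carrier G" "y [^] p = t" and t: "primepow (ord t)" "p dvd ord t"
  shows "primepow (ord y)"
proof -
  obtain q e where qe: "prime q" "0 < e" "ord t = q ^ e" using t(1) by (auto simp: primepow_def)
  then have "p = q" using p t(2) by (metis prime_dvd_power primes_dvd_imp_eq)
  then have "ord y dvd p ^ Suc e" using ord_pth_root_dvd[OF y] qe by simp
  then obtain i where i: "ord y = p ^ i" using divides_primepow_nat[OF p] by blast
  have "i \<noteq> 0"
  proof
    assume "i = 0"
    then have "t = \<one>" using i y ord_eq_1 by auto
    then show False using t(1) by simp
  qed
  then show ?thesis using i p by simp
qed

lemma nat_pow_span_of_roots: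
  fixes p :: nat
  assumes T: "T \<subseteq> carrier G" and h: "h \<in> T \<rightarrow> carrier G"
    and root: "\<And>t. t \<in> T \<Longrightarrow> h t [^] p = t" and y: "y \<in> pow_span T"
  shows "\<exists>k \<in> pow_span (h ` T). k [^] p = y"
proof -
  obtain F c where F: "finite F" "F \<subseteq> T" "y = finprod G (\<lambda>t. t [^] (c t :: nat)) F"
    using y unfolding pow_span_def by blast
  define k where "k = finprod G (\<lambda>t. h t [^] c t) F"
  have hTc: "h ` T \<subseteq> carrier G" using h by auto
  have "k \<in> pow_span (h ` T)"
    unfolding k_def using F h by (intro pow_span_finprod[OF hTc] pow_span_nat_pow[OF hTc] pow_span_inc) auto
  moreover have "k [^] p = y"
    unfolding k_def F(3) using F h root
    by (subst finprod_nat_pow) (auto intro!: finprod_cong simp: Pi_def nat_pow_swap subset_eq)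
  ultimately show ?thesis by blast
qed


definition prime_power_basis :: "'a set \<Rightarrow> nat \<Rightarrow> 'a set \<Rightarrow> bool" where
  "prime_power_basis H d S \<longleftrightarrow> S \<subseteq> H \<and> indep S \<and> H \<subseteq> pow_span S
     \<and> (\<forall>s\<in>S. primepow (ord s) \<and> ord s dvd d)"

lemma indep_Un_indep_mod:
  assumes S: "S \<subseteq> carrier G" "indep S" and W: "subgroup W G"
    and Z: "Z \<subseteq> W" "indep_mod (pow_span S \<inter> W) Z"
    and inv: "\<And>x. x \<in> pow_span S \<Longrightarrow> inv x \<in> pow_span S"
  shows "indep (S \<union> Z)"
  unfolding indep_mod_def
proof (intro allI impI)
  fix F c assume F: "finite F" "F \<subseteq> S \<union> Z" and rel: "finprod G (\<lambda>s. s [^] (c s :: nat)) F \<in> {\<one>}"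
  have Wc: "W \<subseteq> carrier G" using W subgroup.subset by blast
  define F1 where "F1 = F \<inter> S"
  define F2 where "F2 = F - S"
  have fin: "finite F1" "finite F2" and F2Z: "F2 \<subseteq> Z" using F by (auto simp: F1_def F2_def)
  have F1c: "F1 \<subseteq> carrier G" and F2c: "F2 \<subseteq> carrier G"
    using F S Z Wc by (auto simp: F1_def F2_def)
  define y1 where "y1 = finprod G (\<lambda>s. s [^] c s) F1"
  define y2 where "y2 = finprod G (\<lambda>s. s [^] c s) F2"
  have y1c: "y1 \<in> carrier G" and y2c: "y2 \<in> carrier G"
    using F1c F2c by (auto simp: y1_def y2_def intro!: finprod_closed)
  have "finprod G (\<lambda>s. s [^] c s) (F1 \<union> F2) = y1 \<otimes> y2"
    unfolding y1_def y2_def using fin F1c F2c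
    by (intro finprod_Un_disjoint) (auto simp: F1_def F2_def)
  moreover have "F1 \<union> F2 = F" by (auto simp: F1_def F2_def)
  ultimately have y12: "y1 \<otimes> y2 = \<one>" using rel by simp
  have y1S: "y1 \<in> pow_span S" unfolding y1_def using fin by (intro pow_span_memI) (auto simp: F1_def)
  have "y2 \<in> W" unfolding y2_def using F2Z Z(1)
    by (intro subgroup_finprod_closed[OF W] subgroup_nat_pow_closed[OF W]) auto
  moreover have "y2 = inv y1" using y12 y1c y2c by (metis inv_equality m_comm)
  ultimately have "y2 \<in> pow_span S \<inter> W" using inv[OF y1S] by simp
  then have F2_trivial: "\<forall>s\<in>F2. s [^] c s = \<one>"
    using Z(2) fin F2Z unfolding indep_mod_def y2_def by blast
  then have "y2 = \<one>" unfolding y2_def by (intro finprod_one_eqI) auto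
  then have "y1 = \<one>" using y12 y1c by simp
  then have "\<forall>s\<in>F1. s [^] c s = \<one>" using S(2) fin unfolding indep_mod_def y1_def F1_def by blast
  then show "\<forall>s\<in>F. s [^] c s = \<one>" using F2_trivial by (auto simp: F1_def F2_def)
qed

lemma exists_pth_roots:
  fixes p :: nat
  assumes H: "subgroup H G" and p: "prime p" and T: "T \<subseteq> (\<lambda>x. x [^] p) ` H"
    and ord: "\<And>t. t \<in> T \<Longrightarrow> 0 < ord t"
  obtains h where "\<And>t. t \<in> T \<Longrightarrow> h t \<in> H" "\<And>t. t \<in> T \<Longrightarrow> h t [^] p = t"
    "\<And>t. t \<in> T \<Longrightarrow> \<not> p dvd ord t \<Longrightarrow> ord (h t) = ord t"
proof -
  have pH: "(\<lambda>x. x [^] p) ` H \<subseteq> H" using subgroup_nat_pow_closed[OF H] by blast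
  have "\<exists>y. y \<in> H \<and> y [^] p = t \<and> (\<not> p dvd ord t \<longrightarrow> ord y = ord t)" if t: "t \<in> T" for t
  proof (cases "p dvd ord t")
    case True
    then show ?thesis using t T by auto
  next
    case False
    then have "coprime p (ord t)" using p by (simp add: prime_imp_coprime)
    moreover have "t \<in> carrier G" using t T pH subgroup.subset[OF H] by blast
    ultimately obtain u :: nat where "(t [^] u) [^] p = t" "ord (t [^] u) = ord t"
      using exists_pth_root_same_ord ord[OF t] by blast
    moreover have "t [^] u \<in> H" using t T pH subgroup_nat_pow_closed[OF H] by blast
    ultimately show ?thesis by blast
  qed
  then show ?thesis using that by metis
qed

lemma prime_power_basis_lift:
  fixes p m :: nat
  assumes H: "subgroup H G" and p: "prime p" and T: "prime_power_basis ((\<lambda>x. x [^] p) ` H) m T"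
  obtains S where "S \<subseteq> H" "indep S" "\<And>s. s \<in> S \<Longrightarrow> primepow (ord s) \<and> ord s dvd p * m"
    "\<And>x. x \<in> H \<Longrightarrow> \<exists>k \<in> pow_span S. k [^] p = x [^] p"
proof -
  have Hc: "H \<subseteq> carrier G" using H subgroup.subset by blast
  have pH: "(\<lambda>x. x [^] p) ` H \<subseteq> H" using subgroup_nat_pow_closed[OF H] by blast
  have TH: "T \<subseteq> (\<lambda>x. x [^] p) ` H" and T_indep: "indep T"
    and T_ord: "\<And>t. t \<in> T \<Longrightarrow> primepow (ord t) \<and> ord t dvd m"
    using T by (auto simp: prime_power_basis_def)
  have Tc: "T \<subseteq> carrier G" using TH pH Hc by blast
  have "0 < ord t" if "t \<in> T" for t using T_ord[OF that] primepow_gt_0_nat by blast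
  then obtain h where h: "\<And>t. t \<in> T \<Longrightarrow> h t \<in> H" "\<And>t. t \<in> T \<Longrightarrow> h t [^] p = t"
    "\<And>t. t \<in> T \<Longrightarrow> \<not> p dvd ord t \<Longrightarrow> ord (h t) = ord t"
    using exists_pth_roots[OF H p TH] by blast
  have hc: "h \<in> T \<rightarrow> carrier G" using h(1) Hc by auto
  show ?thesis
  proof (rule that[of "h ` T"])
    show "h ` T \<subseteq> H" using h(1) by blast
    show "indep (h ` T)" by (rule indep_image_of_roots[OF Tc T_indep hc h(2,3)])
  next
    fix s assume "s \<in> h ` T"
    then obtain t where t: "t \<in> T" "s = h t" by blast
    have "ord s dvd p * ord t" using ord_pth_root_dvd[of "h t" p t] hc h(2) t by auto
    then have "ord s dvd p * m" using T_ord[OF t(1)] by (meson dvd_mult2 dvd_trans mult_dvd_mono dvd_refl)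
    moreover have "primepow (ord s)"
      using primepow_ord_pth_root[OF p _ h(2)] h(3) T_ord hc t by (cases "p dvd ord t") auto
    ultimately show "primepow (ord s) \<and> ord s dvd p * m" by blast
  next
    fix x assume "x \<in> H"
    then have "x [^] p \<in> pow_span T" using T by (auto simp: prime_power_basis_def)
    then show "\<exists>k \<in> pow_span (h ` T). k [^] p = x [^] p"
      using nat_pow_span_of_roots[OF Tc hc, of p] h(2) by blast
  qed
qed

lemma subgroup_subset_pow_span_Un:
  fixes p :: nat
  assumes H: "subgroup H G" and roots: "\<And>x. x \<in> H \<Longrightarrow> \<exists>k \<in> pow_span S. k [^] p = x [^] p"
    and SZ: "S \<subseteq> H" "Z \<subseteq> H" "pow_span S \<subseteq> H"
    and torsion: "{x \<in> H. x [^] p = \<one>} \<subseteq> pow_span (pow_span S \<union> Z)"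
  shows "H \<subseteq> pow_span (S \<union> Z)"
proof
  fix x assume x: "x \<in> H"
  have Hc: "H \<subseteq> carrier G" using H subgroup.subset by blast
  then have SZc: "S \<union> Z \<subseteq> carrier G" using SZ by blast
  obtain k where k: "k \<in> pow_span S" "k [^] p = x [^] p" using roots[OF x] by blast
  have k': "k \<in> pow_span (S \<union> Z)" using k(1) pow_span_mono[of S "S \<union> Z"] by blast
  have kc: "k \<in> carrier G" and xc: "x \<in> carrier G" using k SZ x Hc by auto
  have "x \<otimes> inv k \<in> {x \<in> H. x [^] p = \<one>}"
    using k x xc kc SZ subgroup.m_closed[OF H] subgroup.m_inv_closed[OF H]
    by (auto simp: nat_pow_distrib nat_pow_inv)
  moreover have "pow_span (pow_span S \<union> Z) \<subseteq> pow_span (S \<union> Z)"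
    using k' pow_span_mono[of S "S \<union> Z"] pow_span_inc[OF SZc]
    by (intro pow_span_subset_pow_span[OF SZc]) blast
  ultimately have "x \<otimes> inv k \<in> pow_span (S \<union> Z)" using torsion by blast
  then have "x \<otimes> inv k \<otimes> k \<in> pow_span (S \<union> Z)" using k' by (rule pow_span_mult[OF SZc])
  then show "x \<in> pow_span (S \<union> Z)" using xc kc by (simp add: m_assoc)
qed

lemma prime_power_basis_step:
  fixes p m :: nat
  assumes H: "subgroup H G" and p: "prime p" and m: "0 < m"
    and exp: "\<And>x. x \<in> H \<Longrightarrow> x [^] (p * m) = \<one>"
    and T: "prime_power_basis ((\<lambda>x. x [^] p) ` H) m T"
  shows "\<exists>S. prime_power_basis H (p * m) S"
proof -
  have Hc: "H \<subseteq> carrier G" using H subgroup.subset by blast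
  obtain S where S: "S \<subseteq> H" "indep S" "\<And>s. s \<in> S \<Longrightarrow> primepow (ord s) \<and> ord s dvd p * m"
    and roots: "\<And>x. x \<in> H \<Longrightarrow> \<exists>k \<in> pow_span S. k [^] p = x [^] p"
    using prime_power_basis_lift[OF H p T] by blast
  have Sc: "S \<subseteq> carrier G" using S(1) Hc by blast
  have span_S: "pow_span S \<subseteq> H" by (rule pow_span_subset_subgroup[OF H S(1)])
  define W where "W = {x \<in> H. x [^] p = \<one>}"
  have W: "subgroup W G" unfolding W_def by (rule subgroup_nat_pow_kernel[OF H])
  \<comment> \<open>\<open>S\<close> generates \<open>H\<close> modulo its \<open>p\<close>-torsion \<open>W\<close>, which is completed by elements of order \<open>p\<close>\<close>
  obtain Z where Z: "Z \<subseteq> W - {\<one>}" "indep_mod (pow_span S \<inter> W) Z"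
      "W \<subseteq> pow_span ((pow_span S \<inter> W) \<union> Z)"
    using exists_indep_mod_complement[OF W p, of "pow_span S \<inter> W"] by (auto simp: W_def)
  have "inv x \<in> pow_span S" if "x \<in> pow_span S" for x
    using inv_in_pow_span[OF Sc that exp] that span_S p m by (auto simp: prime_gt_0_nat)
  then have "indep (S \<union> Z)" using indep_Un_indep_mod[OF Sc S(2) W] Z by blast
  moreover have "H \<subseteq> pow_span (S \<union> Z)"
  proof (rule subgroup_subset_pow_span_Un[OF H roots S(1) _ span_S])
    show "Z \<subseteq> H" using Z(1) by (auto simp: W_def)
    show "{x \<in> H. x [^] p = \<one>} \<subseteq> pow_span (pow_span S \<union> Z)"
      using Z(3) pow_span_mono[of "(pow_span S \<inter> W) \<union> Z" "pow_span S \<union> Z"]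
      unfolding W_def by blast
  qed
  moreover have "primepow (ord z) \<and> ord z dvd p * m" if "z \<in> Z" for z
  proof -
    have "z \<in> carrier G" "z [^] p = \<one>" "z \<noteq> \<one>" using that Z(1) Hc by (auto simp: W_def)
    then have "ord z = p" using p pow_eq_id ord_eq_1 by (metis prime_nat_iff)
    then show ?thesis using p by simp
  qed
  ultimately have "prime_power_basis H (p * m) (S \<union> Z)"
    using S Z(1) by (auto simp: prime_power_basis_def W_def)
  then show ?thesis by blast
qed

lemma exists_prime_power_basis:
  assumes "0 < d" "subgroup H G" "\<And>x. x \<in> H \<Longrightarrow> x [^] d = \<one>"
  shows "\<exists>S. prime_power_basis H d S"
  using assms
proof (induction d arbitrary: H rule: less_induct)
  case (less d)
  have Hc: "H \<subseteq> carrier G" using less.prems(2) subgroup.subset by blast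
  show ?case
  proof (cases "d = 1")
    case True
    then have "H \<subseteq> pow_span {}" using less.prems(3) Hc one_in_pow_span by force
    then show ?thesis by (auto simp: prime_power_basis_def indep_mod_def)
  next
    case False
    obtain p where p: "prime p" "p dvd d" using prime_factor_nat[OF False] by blast
    define m where "m = d div p"
    have d: "d = p * m" using p by (simp add: m_def)
    then have m: "0 < m" "m < d" using less.prems(1) prime_gt_1_nat[OF p(1)] by auto
    have "x [^] m = \<one>" if "x \<in> (\<lambda>x. x [^] p) ` H" for x
      using that less.prems(3) Hc d by (auto simp: nat_pow_pow)
    then obtain T where "prime_power_basis ((\<lambda>x. x [^] p) ` H) m T"
      using less.IH[OF m(2) m(1) subgroup_nat_pow_image[OF less.prems(2)]] by blast
    then show ?thesis
      using prime_power_basis_step[OF less.prems(2) p(1) m(1)] less.prems(3) d by blast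
  qed
qed


lemma nat_pow_hom_integer_mod_group:
  assumes "x \<in> carrier G" "0 < ord x"
  shows "(\<lambda>k::int. x [^] nat k) \<in> hom (integer_mod_group (ord x)) G"
proof (rule homI)
  fix k l assume "k \<in> carrier (integer_mod_group (ord x))" "l \<in> carrier (integer_mod_group (ord x))"
  then have "0 \<le> k" "0 \<le> l" using assms(2) by (auto simp: carrier_integer_mod_group)
  then have "nat ((k + l) mod int (ord x)) = (nat k + nat l) mod ord x"
    by (simp add: nat_mod_distrib nat_add_distrib)
  then show "x [^] nat (k \<otimes>\<^bsub>integer_mod_group (ord x)\<^esub> l) = x [^] nat k \<otimes> x [^] nat l"
    using assms(1) by (simp add: nat_pow_mod nat_pow_mult)
qed (use assms in simp)

definition cyclic_sum_map :: "'i set \<Rightarrow> ('i \<Rightarrow> 'a) \<Rightarrow> ('i \<Rightarrow> int) \<Rightarrow> 'a" where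
  "cyclic_sum_map I g x = gfinprod G (\<lambda>i. g i [^] nat (x i)) I"

abbreviation cyclic_sum_group :: "'i set \<Rightarrow> ('i \<Rightarrow> 'a) \<Rightarrow> ('i \<Rightarrow> int) monoid" where
  "cyclic_sum_group I g \<equiv> sum_group I (\<lambda>i. integer_mod_group (ord (g i)))"

lemma group_cyclic_sum_group: "group (cyclic_sum_group I g)"
  by (rule sum_group) simp

lemma cyclic_sum_map_hom:
  assumes "\<And>i. i \<in> I \<Longrightarrow> g i \<in> carrier G \<and> 0 < ord (g i)"
  shows "cyclic_sum_map I g \<in> hom (cyclic_sum_group I g) G"
  unfolding cyclic_sum_map_def using assms
  by (intro hom_group_sum nat_pow_hom_integer_mod_group) auto

lemma cyclic_sum_map_eq_finprod:
  assumes g: "g \<in> I \<rightarrow> carrier G" and J: "J \<subseteq> I" "finite J" "\<And>i. i \<in> I - J \<Longrightarrow> x i = 0"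
  shows "cyclic_sum_map I g x = finprod G (\<lambda>i. g i [^] nat (x i)) J"
proof -
  have "gfinprod G (\<lambda>i. g i [^] nat (x i)) I = gfinprod G (\<lambda>i. g i [^] nat (x i)) J"
    using J g by (intro gfinprod_mono_neutral_cong_left[symmetric]) auto
  also have "\<dots> = finprod G (\<lambda>i. g i [^] nat (x i)) J"
    by (rule gfinprod_eq_finprod) (use J g in auto)
  finally show ?thesis by (simp add: cyclic_sum_map_def)
qed

lemma carrier_cyclic_sum_group:
  assumes "\<And>i. i \<in> I \<Longrightarrow> 0 < ord (g i)"
  shows "carrier (cyclic_sum_group I g) = {x \<in> \<Pi>\<^sub>E i\<in>I. {0..<int (ord (g i))}. finite {i \<in> I. x i \<noteq> 0}}"
  using assms by (auto simp: carrier_sum_group carrier_integer_mod_group PiE_iff)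


lemma cyclic_sum_map_surj:
  assumes g: "\<And>i. i \<in> I \<Longrightarrow> g i \<in> carrier G \<and> 0 < ord (g i)" and inj: "inj_on g I"
    and gen: "carrier G \<subseteq> pow_span (g ` I)"
  shows "carrier G \<subseteq> cyclic_sum_map I g ` carrier (cyclic_sum_group I g)"
proof
  fix y assume "y \<in> carrier G"
  then obtain F c where F: "finite F" "F \<subseteq> g ` I" "y = finprod G (\<lambda>s. s [^] (c s :: nat)) F"
    using gen unfolding pow_span_def by blast
  obtain J where J: "J \<subseteq> I" "F = g ` J" using F(2) subset_imageE by blast
  have inj_J: "inj_on g J" using inj J(1) inj_on_subset by blast
  then have finJ: "finite J" using F(1) J(2) finite_imageD by blast
  define x where "x = (\<lambda>i\<in>I. if i \<in> J then int (c (g i) mod ord (g i)) else 0)"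
  have "{i \<in> I. x i \<noteq> 0} \<subseteq> J" by (auto simp: x_def)
  then have "x \<in> carrier (cyclic_sum_group I g)"
    using finJ g by (auto simp: carrier_cyclic_sum_group x_def finite_subset)
  moreover have "cyclic_sum_map I g x = y"
  proof -
    have "cyclic_sum_map I g x = finprod G (\<lambda>i. g i [^] nat (x i)) J"
      using J finJ g by (intro cyclic_sum_map_eq_finprod) (auto simp: x_def)
    also have "\<dots> = finprod G (\<lambda>i. g i [^] c (g i)) J"
      using J g by (intro finprod_cong) (auto simp: x_def nat_pow_mod Pi_def subset_eq)
    also have "\<dots> = y"
      unfolding F(3) J(2) using inj_J J g by (subst finprod_reindex) (auto simp: Pi_def)
    finally show ?thesis .
  qed
  ultimately show "y \<in> cyclic_sum_map I g ` carrier (cyclic_sum_group I g)" by blast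
qed

lemma cyclic_sum_map_kernel:
  assumes g: "\<And>i. i \<in> I \<Longrightarrow> g i \<in> carrier G \<and> 0 < ord (g i)" and inj: "inj_on g I"
    and indep: "indep (g ` I)"
    and x: "x \<in> carrier (cyclic_sum_group I g)" "cyclic_sum_map I g x = \<one>"
  shows "x = \<one>\<^bsub>cyclic_sum_group I g\<^esub>"
proof -
  define J where "J = {i \<in> I. x i \<noteq> 0}"
  have finJ: "finite J" and x_range: "\<And>i. i \<in> I \<Longrightarrow> 0 \<le> x i \<and> x i < int (ord (g i))"
    and x_ext: "x \<in> extensional I"
    using x(1) g by (auto simp: carrier_cyclic_sum_group J_def PiE_iff)
  have inj_J: "inj_on g J" using inj by (rule inj_on_subset) (auto simp: J_def)
  define c where "c s = nat (x (inv_into I g s))" for s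
  have "finprod G (\<lambda>s. s [^] c s) (g ` J) = finprod G (\<lambda>i. g i [^] c (g i)) J"
    using inj_J g by (subst finprod_reindex) (auto simp: J_def Pi_def)
  also have "\<dots> = finprod G (\<lambda>i. g i [^] nat (x i)) J"
    using inj g by (intro finprod_cong) (auto simp: c_def J_def Pi_def)
  also have "\<dots> = \<one>" using x(2) g finJ by (subst cyclic_sum_map_eq_finprod[symmetric]) (auto simp: J_def)
  finally have trivial: "g i [^] c (g i) = \<one>" if "i \<in> J" for i
    using indepD[OF indep finite_imageI[OF finJ]] that by (auto simp: J_def)
  have "J = {}"
  proof (rule ccontr)
    assume "J \<noteq> {}"
    then obtain i where i: "i \<in> J" by blast
    then have iI: "i \<in> I" "x i \<noteq> 0" by (auto simp: J_def)
    then have "g i [^] nat (x i) = \<one>" using trivial[OF i] inj by (simp add: c_def)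
    then have "ord (g i) dvd nat (x i)" using g[OF iI(1)] pow_eq_id by blast
    moreover have "0 < nat (x i)" "nat (x i) < ord (g i)" using x_range[OF iI(1)] iI(2) by auto
    ultimately show False by (simp add: nat_dvd_not_less)
  qed
  then show ?thesis using x_ext by (auto simp: J_def extensional_def)
qed

lemma cyclic_sum_map_iso:
  assumes g: "\<And>i. i \<in> I \<Longrightarrow> g i \<in> carrier G \<and> 0 < ord (g i)" and inj: "inj_on g I"
    and indep: "indep (g ` I)" and gen: "carrier G \<subseteq> pow_span (g ` I)"
  shows "cyclic_sum_map I g \<in> iso (cyclic_sum_group I g) G"
proof -
  interpret group_hom "cyclic_sum_group I g" G "cyclic_sum_map I g"
    using cyclic_sum_map_hom[OF g] group_cyclic_sum_group
    by (simp add: group_hom_def group_hom_axioms_def is_group)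
  show ?thesis
    unfolding iso_iff using cyclic_sum_map_surj[OF g inj gen] cyclic_sum_map_kernel[OF g inj indep] by blast
qed

theorem countable_bounded_iso_sum_cyclic:
  assumes countable: "countable (carrier G)" and d: "0 < d" and exp: "\<And>x. x \<in> carrier G \<Longrightarrow> x [^] d = \<one>"
  shows "\<exists>(I :: nat set) n. (\<forall>i\<in>I. primepow (n i) \<and> n i dvd d)
           \<and> G \<cong> sum_group I (\<lambda>i. integer_mod_group (n i))"
proof -
  obtain S where S: "prime_power_basis (carrier G) d S"
    using exists_prime_power_basis[OF d subgroup_self exp] by blast
  then have Sc: "S \<subseteq> carrier G" by (simp add: prime_power_basis_def)
  then have cS: "countable S" using countable countable_subset by blast
  define I where "I = to_nat_on S ` S"
  define g where "g = from_nat_into S"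
  have gI: "g ` I = S" using cS by (force simp: I_def g_def)
  have inj: "inj_on g I" using cS by (intro inj_onI) (auto simp: I_def g_def)
  have basis: "\<And>i. i \<in> I \<Longrightarrow> g i \<in> carrier G \<and> primepow (ord (g i)) \<and> ord (g i) dvd d"
    and "indep (g ` I)" "carrier G \<subseteq> pow_span (g ` I)"
    using S Sc gI by (auto simp: prime_power_basis_def)
  then have "cyclic_sum_map I g \<in> iso (cyclic_sum_group I g) G"
    using inj primepow_gt_0_nat by (intro cyclic_sum_map_iso) auto
  then have "cyclic_sum_group I g \<cong> G" by (rule is_isoI)
  then have "G \<cong> cyclic_sum_group I g" by (rule group.iso_sym[OF group_cyclic_sum_group])
  then show ?thesis using basis by (intro exI[of _ I] exI[of _ "\<lambda>i. ord (g i)"]) auto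
qed

end

lemma (in group) comm_group_FactGroup:
  assumes N: "N \<lhd> G"
    and comm: "\<And>a b. a \<in> carrier G \<Longrightarrow> b \<in> carrier G \<Longrightarrow> a \<otimes> b \<otimes> inv a \<otimes> inv b \<in> N"
  shows "comm_group (G Mod N)"
proof -
  interpret normal N G by (rule N)
  have "X \<otimes>\<^bsub>G Mod N\<^esub> Y = Y \<otimes>\<^bsub>G Mod N\<^esub> X"
    if XY: "X \<in> carrier (G Mod N)" "Y \<in> carrier (G Mod N)" for X Y
  proof -
    obtain a b where ab: "a \<in> carrier G" "b \<in> carrier G" "X = N #> a" "Y = N #> b"
      using XY by (auto simp: carrier_FactGroup)
    have "(a \<otimes> b) \<otimes> inv (b \<otimes> a) \<in> N"
      using comm[OF ab(1,2)] ab by (simp add: inv_mult_group m_assoc)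
    then have "N #> (b \<otimes> a) = N #> (a \<otimes> b)"
      using ab by (intro repr_independence[OF _ _ subgroup_axioms] rcos_module_rev[OF is_group]) auto
    then show ?thesis using ab by (simp add: rcos_sum)
  qed
  then show ?thesis using factorgroup_is_group by (simp add: group.group_comm_groupI)
qed

lemma (in normal) FactGroup_nat_pow_eq_one:
  assumes "\<And>a. a \<in> carrier G \<Longrightarrow> a [^] (d::nat) \<in> H" and "X \<in> carrier (G Mod H)"
  shows "X [^]\<^bsub>G Mod H\<^esub> d = \<one>\<^bsub>G Mod H\<^esub>"
proof -
  obtain a where a: "a \<in> carrier G" "X = H #> a" using assms(2) by (auto simp: carrier_FactGroup)
  then have "X [^]\<^bsub>G Mod H\<^esub> d = H #> (a [^] d)" using FactGroup_pow by simp
  also have "\<dots> = H" using assms(1)[OF a(1)] rcos_const[OF is_group] by simp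
  finally show ?thesis by simp
qed

section \<open>Rational spans of lattices\<close>

definition span_over :: "real set \<Rightarrow> ('i::finite \<Rightarrow> real^'m) \<Rightarrow> (real^'m) set" where
  "span_over A c = {\<Sum>i\<in>UNIV. z i *\<^sub>R c i | z. \<forall>i. z i \<in> A}"

lemma span_over_mono: "A \<subseteq> B \<Longrightarrow> span_over A c \<subseteq> span_over B c"
  unfolding span_over_def by blast

lemma span_over_Ints_eq_range:
  "span_over \<int> b = range (\<lambda>k :: 'i::finite \<Rightarrow> int. \<Sum>i\<in>UNIV. of_int (k i) *\<^sub>R b i)"
proof
  show "span_over \<int> b \<subseteq> range (\<lambda>k. \<Sum>i\<in>UNIV. of_int (k i) *\<^sub>R b i)"
  proof
    fix x assume "x \<in> span_over \<int> b"
    then obtain z where z: "\<forall>i. z i \<in> \<int>" "x = (\<Sum>i\<in>UNIV. z i *\<^sub>R b i)"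
      unfolding span_over_def by blast
    then have "x = (\<Sum>i\<in>UNIV. of_int \<lfloor>z i\<rfloor> *\<^sub>R b i)" by (auto elim!: Ints_cases)
    then show "x \<in> range (\<lambda>k. \<Sum>i\<in>UNIV. of_int (k i) *\<^sub>R b i)"
      by (intro image_eqI[of _ _ "\<lambda>i. \<lfloor>z i\<rfloor>"]) auto
  qed
  show "range (\<lambda>k. \<Sum>i\<in>UNIV. of_int (k i) *\<^sub>R b i) \<subseteq> span_over \<int> b"
  proof clarify
    fix k :: "'i \<Rightarrow> int"
    show "(\<Sum>i\<in>UNIV. of_int (k i) *\<^sub>R b i) \<in> span_over \<int> b"
      unfolding span_over_def by (intro CollectI exI[of _ "\<lambda>i. of_int (k i)"]) simp
  qed
qed

locale real_subring =
  fixes A :: "real set"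
  assumes zero_mem: "0 \<in> A" and one_mem: "1 \<in> A"
    and add_mem: "\<And>x y. x \<in> A \<Longrightarrow> y \<in> A \<Longrightarrow> x + y \<in> A"
    and mult_mem: "\<And>x y. x \<in> A \<Longrightarrow> y \<in> A \<Longrightarrow> x * y \<in> A"
    and uminus_mem: "\<And>x. x \<in> A \<Longrightarrow> - x \<in> A"
begin

lemma span_over_zero: "0 \<in> span_over A c"
  unfolding span_over_def by (intro CollectI exI[of _ "\<lambda>_. 0"]) (simp add: zero_mem)

lemma span_over_add:
  assumes "x \<in> span_over A c" "y \<in> span_over A c" shows "x + y \<in> span_over A c"
proof -
  obtain z w where "\<forall>i. z i \<in> A" "\<forall>i. w i \<in> A"
    "x = (\<Sum>i\<in>UNIV. z i *\<^sub>R c i)" "y = (\<Sum>i\<in>UNIV. w i *\<^sub>R c i)"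
    using assms unfolding span_over_def by blast
  then show ?thesis unfolding span_over_def using add_mem
    by (intro CollectI exI[of _ "\<lambda>i. z i + w i"]) (simp add: sum.distrib scaleR_add_left)
qed

lemma span_over_scaleR:
  assumes "a \<in> A" "x \<in> span_over A c" shows "a *\<^sub>R x \<in> span_over A c"
proof -
  obtain z where "\<forall>i. z i \<in> A" "x = (\<Sum>i\<in>UNIV. z i *\<^sub>R c i)"
    using assms(2) unfolding span_over_def by blast
  then show ?thesis unfolding span_over_def using assms(1) mult_mem
    by (intro CollectI exI[of _ "\<lambda>i. a * z i"]) (simp add: scaleR_sum_right)
qed

lemma span_over_uminus: "x \<in> span_over A c \<Longrightarrow> - x \<in> span_over A c"
  using span_over_scaleR[OF uminus_mem[OF one_mem]] by simp

lemma span_over_basis: "c i \<in> span_over A c"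
proof -
  have "(\<Sum>j\<in>UNIV. (if j = i then 1 else 0) *\<^sub>R c j) = (\<Sum>j\<in>UNIV. if j = i then c j else 0)"
    by (intro sum.cong) auto
  then have "(\<Sum>j\<in>UNIV. (if j = i then 1 else 0) *\<^sub>R c j) = c i" by simp
  then show ?thesis unfolding span_over_def using zero_mem one_mem
    by (intro CollectI exI[of _ "\<lambda>j. if j = i then 1 else 0"]) auto
qed

lemma span_over_subset:
  assumes "0 \<in> V" "\<And>x y. x \<in> V \<Longrightarrow> y \<in> V \<Longrightarrow> x + y \<in> V"
    and "\<And>a x. a \<in> A \<Longrightarrow> x \<in> V \<Longrightarrow> a *\<^sub>R x \<in> V" and "\<And>i. c i \<in> V"
  shows "span_over A c \<subseteq> V"
proof
  fix x assume "x \<in> span_over A c"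
  then obtain z where z: "\<forall>i. z i \<in> A" "x = (\<Sum>i\<in>UNIV. z i *\<^sub>R c i)"
    unfolding span_over_def by blast
  have "(\<Sum>i\<in>F. z i *\<^sub>R c i) \<in> V" for F
    by (induction F rule: infinite_finite_induct) (use assms z(1) in auto)
  then show "x \<in> V" using z(2) by simp
qed

lemma matrix_image_span_over: "(\<lambda>x. M *v x) ` span_over A c = span_over A (\<lambda>i. M *v c i)"
proof -
  have M_sum: "M *v (\<Sum>i\<in>F. z i *\<^sub>R c i) = (\<Sum>i\<in>F. z i *\<^sub>R (M *v c i))" for F z
    by (induction F rule: infinite_finite_induct)
      (simp_all add: matrix_vector_right_distrib matrix_vector_mult_scaleR)
  show ?thesis
  proof
    show "(\<lambda>x. M *v x) ` span_over A c \<subseteq> span_over A (\<lambda>i. M *v c i)"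
    proof clarify
      fix x assume "x \<in> span_over A c"
      then obtain z where "\<forall>i. z i \<in> A" "x = (\<Sum>i\<in>UNIV. z i *\<^sub>R c i)"
        unfolding span_over_def by blast
      then show "M *v x \<in> span_over A (\<lambda>i. M *v c i)"
        unfolding span_over_def by (simp add: M_sum) blast
    qed
    show "span_over A (\<lambda>i. M *v c i) \<subseteq> (\<lambda>x. M *v x) ` span_over A c"
    proof
      fix y assume "y \<in> span_over A (\<lambda>i. M *v c i)"
      then obtain z where "\<forall>i. z i \<in> A" "y = M *v (\<Sum>i\<in>UNIV. z i *\<^sub>R c i)"
        unfolding span_over_def M_sum by blast
      then show "y \<in> (\<lambda>x. M *v x) ` span_over A c" unfolding span_over_def by blast
    qed
  qed
qed

end

interpretation Ints: real_subring \<int>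
  by unfold_locales auto

interpretation Rats: real_subring \<rat>
  by unfold_locales auto

lemma finite_common_multiple:
  fixes P :: "'k::finite \<Rightarrow> nat \<Rightarrow> bool"
  assumes "\<And>i. \<exists>n. 0 < n \<and> P i n" and "\<And>i n k. P i n \<Longrightarrow> 0 < k \<Longrightarrow> P i (k * n)"
  shows "\<exists>N. 0 < N \<and> (\<forall>i. P i N)"
proof -
  obtain n where n: "\<And>i. 0 < n i" "\<And>i. P i (n i)" using assms(1) by metis
  define N where "N = (\<Prod>i\<in>UNIV. n i)"
  have "P i N" for i
  proof -
    have "N = (\<Prod>j\<in>UNIV - {i}. n j) * n i" unfolding N_def by (simp add: prod.remove mult.commute)
    moreover have "0 < (\<Prod>j\<in>UNIV - {i}. n j)" using n(1) by (simp add: prod_pos)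
    ultimately show ?thesis using assms(2) n(2) by simp
  qed
  moreover have "0 < N" using n(1) by (simp add: N_def prod_pos)
  ultimately show ?thesis by blast
qed

lemma Rats_denominator: "q \<in> \<rat> \<Longrightarrow> \<exists>n::nat. 0 < n \<and> real n * q \<in> \<int>"
proof -
  assume "q \<in> \<rat>"
  then obtain a b where ab: "b > 0" "q = of_int a / of_int b" by (elim Rats_cases') blast
  then have "real (nat b) * q = of_int a" by simp
  then show ?thesis using ab by (intro exI[of _ "nat b"]) auto
qed

lemma span_over_Rats_denominator:
  fixes x :: "'k::finite \<Rightarrow> real^'m" and c :: "'i::finite \<Rightarrow> real^'m"
  assumes "\<And>k. x k \<in> span_over \<rat> c"
  shows "\<exists>N::nat. 0 < N \<and> (\<forall>k. real N *\<^sub>R x k \<in> span_over \<int> c)"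
proof (rule finite_common_multiple)
  fix k
  obtain q where q: "\<forall>i. q i \<in> \<rat>" "x k = (\<Sum>i\<in>UNIV. q i *\<^sub>R c i)"
    using assms unfolding span_over_def by blast
  have "\<exists>N::nat. 0 < N \<and> (\<forall>i. real N * q i \<in> \<int>)"
  proof (rule finite_common_multiple)
    show "\<exists>n. 0 < n \<and> real n * q i \<in> \<int>" for i using Rats_denominator q(1) by blast
    show "real (m * n) * q i \<in> \<int>" if "real n * q i \<in> \<int>" for i n m
      using Ints_mult[OF Ints_of_nat[of m] that] by (simp add: mult.assoc)
  qed
  then obtain N :: nat where N: "0 < N" "\<forall>i. real N * q i \<in> \<int>" by blast
  have "real N *\<^sub>R x k = (\<Sum>i\<in>UNIV. (real N * q i) *\<^sub>R c i)"
    by (simp add: q(2) scaleR_sum_right)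
  also have "\<dots> \<in> span_over \<int> c"
    unfolding span_over_def using N(2) by (intro CollectI exI[of _ "\<lambda>i. real N * q i"]) simp
  finally show "\<exists>N. 0 < N \<and> real N *\<^sub>R x k \<in> span_over \<int> c" using N(1) by blast
next
  show "real (m * n) *\<^sub>R x k \<in> span_over \<int> c" if "real n *\<^sub>R x k \<in> span_over \<int> c" for k n m
    using Ints.span_over_scaleR[OF Ints_of_nat that, of m] by simp
qed

lemma translate_eq_if_diff_mem:
  fixes H :: "'a::ab_group_add set"
  assumes add: "\<And>u v. u \<in> H \<Longrightarrow> v \<in> H \<Longrightarrow> u + v \<in> H" and uminus: "\<And>u. u \<in> H \<Longrightarrow> - u \<in> H"
    and diff: "x - y \<in> H"
  shows "(\<lambda>h. x + h) ` H = (\<lambda>h. y + h) ` H"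
proof safe
  fix h assume "h \<in> H"
  show "x + h \<in> (\<lambda>h. y + h) ` H"
    using add[OF diff \<open>h \<in> H\<close>] by (intro image_eqI[of _ _ "(x - y) + h"]) auto
next
  fix h assume "h \<in> H"
  show "y + h \<in> (\<lambda>h. x + h) ` H"
    using add[OF uminus[OF diff] \<open>h \<in> H\<close>] by (intro image_eqI[of _ _ "- (x - y) + h"]) auto
qed

lemma finite_index_if_multiples_mem:
  fixes H :: "(real^'m) set" and c :: "'i::finite \<Rightarrow> real^'m"
  assumes add: "\<And>u v. u \<in> H \<Longrightarrow> v \<in> H \<Longrightarrow> u + v \<in> H" and uminus: "\<And>u. u \<in> H \<Longrightarrow> - u \<in> H"
    and N: "0 < N" "\<And>x. x \<in> span_over \<int> c \<Longrightarrow> real N *\<^sub>R x \<in> H"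
  shows "finite_index H (span_over \<int> c)"
proof -
  define K where "K = Pi UNIV (\<lambda>_::'i. {..<N})"
  have "finite K" unfolding K_def using finite_PiE[of UNIV "\<lambda>_::'i. {..<N}"] by (simp add: PiE_UNIV_domain)
  define rep where "rep k = (\<Sum>i\<in>UNIV. real (k i) *\<^sub>R c i)" for k :: "'i \<Rightarrow> nat"
  have "(\<lambda>x. (\<lambda>h. x + h) ` H) ` span_over \<int> c \<subseteq> (\<lambda>k. (\<lambda>h. rep k + h) ` H) ` K"
  proof clarify
    fix x assume "x \<in> span_over \<int> c"
    then obtain z where z: "\<forall>i. z i \<in> \<int>" "x = (\<Sum>i\<in>UNIV. z i *\<^sub>R c i)"
      unfolding span_over_def by blast
    define k where "k i = nat (\<lfloor>z i\<rfloor> mod int N)" for i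
    define w where "w i = \<lfloor>z i\<rfloor> div int N" for i
    have "z i = real (k i) + real N * of_int (w i)" for i
    proof -
      have "z i = of_int (\<lfloor>z i\<rfloor> mod int N + int N * w i)" using z(1) by (simp add: w_def Ints_cases)
      then show ?thesis using N(1) by (simp add: k_def)
    qed
    then have "x - rep k = real N *\<^sub>R (\<Sum>i\<in>UNIV. of_int (w i) *\<^sub>R c i)"
      unfolding z(2) rep_def
      by (simp add: sum_subtractf[symmetric] scaleR_sum_right scaleR_diff_left[symmetric])
    moreover have "(\<Sum>i\<in>UNIV. of_int (w i) *\<^sub>R c i) \<in> span_over \<int> c"
      unfolding span_over_def by (intro CollectI exI[of _ "\<lambda>i. of_int (w i)"]) simp
    ultimately have "x - rep k \<in> H" using N(2) by metis
    from add uminus this have "(\<lambda>h. x + h) ` H = (\<lambda>h. rep k + h) ` H" by (rule translate_eq_if_diff_mem)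
    moreover have "k \<in> K" using N(1) by (auto simp: K_def k_def nat_less_iff)
    ultimately show "(\<lambda>h. x + h) ` H \<in> (\<lambda>k. (\<lambda>h. rep k + h) ` H) ` K" by blast
  qed
  then show ?thesis unfolding finite_index_def by (rule finite_surj[OF \<open>finite K\<close>])
qed

lemma finite_index_imp_multiple_mem:
  fixes H X :: "(real^'m) set"
  assumes fi: "finite_index H X" and H: "0 \<in> H" "\<And>u. u \<in> H \<Longrightarrow> - u \<in> H"
    and x: "\<And>k::nat. real k *\<^sub>R x \<in> X"
  shows "\<exists>m::nat. 0 < m \<and> real m *\<^sub>R x \<in> H"
proof -
  define f where "f k = (\<lambda>h. real k *\<^sub>R x + h) ` H" for k :: nat
  have "range f \<subseteq> (\<lambda>x. (\<lambda>h. x + h) ` H) ` X" using x by (auto simp: f_def)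
  then have "finite (range f)" using fi finite_subset unfolding finite_index_def by blast
  then have "\<not> inj f" using finite_imageD infinite_UNIV_nat by blast
  then obtain i i' where "f i = f i'" "i \<noteq> i'" unfolding inj_def by blast
  then obtain j k where jk: "f j = f k" "j < k"
    by (cases "i < i'") (auto simp: neq_iff)
  have "real j *\<^sub>R x \<in> f k" using jk(1) H(1) by (auto simp: f_def)
  then obtain h where h: "h \<in> H" "real j *\<^sub>R x = real k *\<^sub>R x + h" by (auto simp: f_def)
  then have "real (k - j) *\<^sub>R x = - h" using jk(2) by (simp add: of_nat_diff scaleR_diff_left algebra_simps)
  then show ?thesis using H(2)[OF h(1)] jk(2) by (intro exI[of _ "k - j"]) auto
qed

lemma Ints_span_subset_Rats_span: "span_over \<int> c \<subseteq> span_over \<rat> c"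
  by (rule span_over_mono) (auto elim: Ints_cases)

lemma finite_index_imp_Rats_span_subset:
  fixes c c' :: "'i::finite \<Rightarrow> real^'m"
  assumes fi: "finite_index (span_over \<int> c \<inter> span_over \<int> c') (span_over \<int> c)"
  shows "span_over \<rat> c \<subseteq> span_over \<rat> c'"
proof (rule Rats.span_over_subset)
  fix i
  obtain m :: nat where m: "0 < m" "real m *\<^sub>R c i \<in> span_over \<int> c'"
    using finite_index_imp_multiple_mem[OF fi] Ints.span_over_zero Ints.span_over_uminus
      Ints.span_over_scaleR[OF Ints_of_nat Ints.span_over_basis] by blast
  then have "real m *\<^sub>R c i \<in> span_over \<rat> c'" using Ints_span_subset_Rats_span by blast
  then have "inverse (real m) *\<^sub>R (real m *\<^sub>R c i) \<in> span_over \<rat> c'"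
    by (rule Rats.span_over_scaleR[rotated]) simp
  then show "c i \<in> span_over \<rat> c'" using m(1) by simp
qed (auto intro: Rats.span_over_zero Rats.span_over_add Rats.span_over_scaleR)

lemma Rats_span_eq_imp_finite_index:
  fixes c c' :: "'i::finite \<Rightarrow> real^'m"
  assumes eq: "span_over \<rat> c = span_over \<rat> c'"
  shows "finite_index (span_over \<int> c \<inter> span_over \<int> c') (span_over \<int> c')"
proof -
  obtain N :: nat where N: "0 < N" "\<And>i. real N *\<^sub>R c' i \<in> span_over \<int> c"
    using span_over_Rats_denominator[of c' c] eq Rats.span_over_basis by blast
  have "span_over \<int> c' \<subseteq> {y. real N *\<^sub>R y \<in> span_over \<int> c}"
  proof (rule Ints.span_over_subset)
    show "a *\<^sub>R x \<in> {y. real N *\<^sub>R y \<in> span_over \<int> c}"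
      if "a \<in> \<int>" "x \<in> {y. real N *\<^sub>R y \<in> span_over \<int> c}" for a x
      using Ints.span_over_scaleR[OF that(1)] that(2) by (metis mem_Collect_eq scaleR_scaleR mult.commute)
  qed (use N(2) Ints.span_over_zero Ints.span_over_add in \<open>auto simp: scaleR_add_right\<close>)
  then show ?thesis
    using N(1) Ints.span_over_scaleR[OF Ints_of_nat]
    by (intro finite_index_if_multiples_mem) (auto intro: Ints.span_over_add Ints.span_over_uminus)
qed

lemma commensurate_span_over_iff:
  fixes c c' :: "'i::finite \<Rightarrow> real^'m"
  shows "commensurate (span_over \<int> c) (span_over \<int> c') \<longleftrightarrow> span_over \<rat> c = span_over \<rat> c'"
  unfolding commensurate_def
  using finite_index_imp_Rats_span_subset[of c c'] finite_index_imp_Rats_span_subset[of c' c]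
    Rats_span_eq_imp_finite_index[of c c'] Rats_span_eq_imp_finite_index[of c' c]
  by (auto simp: Int_commute)

section \<open>Coincidence and similarity rotations\<close>

lemma SO_set_mult: "R \<in> SO_set \<Longrightarrow> S \<in> SO_set \<Longrightarrow> R ** S \<in> SO_set"
  unfolding SO_set_def by (simp add: orthogonal_matrix_mul det_mul)

lemma SO_set_transpose: "R \<in> SO_set \<Longrightarrow> transpose R \<in> SO_set"
  unfolding SO_set_def by simp

lemma mat_1_in_SO_set: "mat 1 \<in> SO_set"
  unfolding SO_set_def by (simp add: orthogonal_matrix_id)

lemma SO_set_transpose_mult: "R \<in> SO_set \<Longrightarrow> transpose R ** R = mat 1"
  unfolding SO_set_def orthogonal_matrix_def by simp

lemma
  fixes S :: "(real^'n^'n) set"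
  assumes S: "S \<subseteq> SO_set" "mat 1 \<in> S" "\<And>R T. R \<in> S \<Longrightarrow> T \<in> S \<Longrightarrow> R ** T \<in> S"
    "\<And>R. R \<in> S \<Longrightarrow> transpose R \<in> S"
  shows group_SO_subgroup: "group (SO_subgroup S)"
    and inv_SO_subgroup: "R \<in> S \<Longrightarrow> inv\<^bsub>SO_subgroup S\<^esub> R = transpose R"
proof -
  have inverse: "transpose R \<otimes>\<^bsub>SO_subgroup S\<^esub> R = \<one>\<^bsub>SO_subgroup S\<^esub>" if "R \<in> S" for R
    using that S(1) SO_set_transpose_mult by (auto simp: SO_subgroup_def)
  show group: "group (SO_subgroup S)"
  proof (rule groupI)
    show "\<exists>y\<in>carrier (SO_subgroup S). y \<otimes>\<^bsub>SO_subgroup S\<^esub> x = \<one>\<^bsub>SO_subgroup S\<^esub>"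
      if "x \<in> carrier (SO_subgroup S)" for x
      using that inverse S(4) by (auto simp: SO_subgroup_def)
  qed (use S in \<open>auto simp: SO_subgroup_def matrix_mul_assoc\<close>)
  show "inv\<^bsub>SO_subgroup S\<^esub> R = transpose R" if "R \<in> S"
    using group.inv_equality[OF group inverse[OF that]] that S(4) by (simp add: SO_subgroup_def)
qed

definition preserves_rat_span :: "('i::finite \<Rightarrow> real^'m) \<Rightarrow> real^'m^'m \<Rightarrow> bool" where
  "preserves_rat_span b M \<longleftrightarrow> (\<lambda>x. M *v x) ` span_over \<rat> b = span_over \<rat> b"

lemma preserves_rat_span_one: "preserves_rat_span b (mat 1)"
  by (simp add: preserves_rat_span_def)

lemma preserves_rat_span_mult:
  assumes "preserves_rat_span b A" "preserves_rat_span b B"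
  shows "preserves_rat_span b (A ** B)"
proof -
  have "(\<lambda>x. (A ** B) *v x) ` V = (\<lambda>x. A *v x) ` (\<lambda>x. B *v x) ` V" for V
    by (simp add: image_image matrix_vector_mul_assoc)
  then show ?thesis using assms by (simp add: preserves_rat_span_def)
qed

lemma preserves_rat_span_left_inverse:
  assumes "preserves_rat_span b A" "A' ** A = mat 1"
  shows "preserves_rat_span b A'"
proof -
  have "(\<lambda>x. A' *v x) ` span_over \<rat> b = (\<lambda>x. A' *v x) ` (\<lambda>x. A *v x) ` span_over \<rat> b"
    using assms(1) by (simp add: preserves_rat_span_def)
  also have "\<dots> = span_over \<rat> b" by (simp add: image_image matrix_vector_mul_assoc assms(2))
  finally show ?thesis by (simp add: preserves_rat_span_def)
qed

lemma preserves_rat_span_scaleR: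
  assumes "preserves_rat_span b A" "q \<in> \<rat>" "q \<noteq> 0"
  shows "preserves_rat_span b (q *\<^sub>R A)"
proof -
  have "(\<lambda>x. q *\<^sub>R x) ` span_over \<rat> b = span_over \<rat> b"
  proof
    show "(\<lambda>x. q *\<^sub>R x) ` span_over \<rat> b \<subseteq> span_over \<rat> b"
      using Rats.span_over_scaleR[OF assms(2)] by blast
    show "span_over \<rat> b \<subseteq> (\<lambda>x. q *\<^sub>R x) ` span_over \<rat> b"
    proof
      fix x assume "x \<in> span_over \<rat> b"
      then have "inverse q *\<^sub>R x \<in> span_over \<rat> b" using assms(2) by (intro Rats.span_over_scaleR) auto
      then show "x \<in> (\<lambda>x. q *\<^sub>R x) ` span_over \<rat> b" using assms(3) by (intro image_eqI) auto
    qed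
  qed
  moreover have "(\<lambda>x. (q *\<^sub>R A) *v x) ` V = (\<lambda>x. q *\<^sub>R x) ` (\<lambda>x. A *v x) ` V" for V
    by (simp add: image_image scaleR_matrix_vector_assoc)
  ultimately show ?thesis using assms(1) by (simp add: preserves_rat_span_def)
qed

lemma scaleR_matrix_mul_scaleR: "(x *\<^sub>R A) ** (y *\<^sub>R B) = (x * y) *\<^sub>R (A ** B :: real^'n^'m)"
  by (simp add: matrix_scalar_ac scalar_matrix_assoc[symmetric])

lemma preserves_rat_span_inverse_scaled:
  assumes "R \<in> SO_set" "0 < \<alpha>" "preserves_rat_span b (\<alpha> *\<^sub>R R)"
  shows "preserves_rat_span b (inverse \<alpha> *\<^sub>R transpose R)"
  using assms SO_set_transpose_mult[OF assms(1)]
  by (intro preserves_rat_span_left_inverse[OF assms(3)]) (simp add: scaleR_matrix_mul_scaleR)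

lemma SOC_span_over: "SOC (span_over \<int> b) = {R \<in> SO_set. preserves_rat_span b R}"
proof -
  have "commensurate (span_over \<int> b) ((\<lambda>x. R *v x) ` span_over \<int> b) \<longleftrightarrow> preserves_rat_span b R" for R
    unfolding preserves_rat_span_def Ints.matrix_image_span_over Rats.matrix_image_span_over
      commensurate_span_over_iff by auto
  then show ?thesis unfolding SOC_def by auto
qed

lemma SOS_span_over:
  "SOS (span_over \<int> b) = {R \<in> SO_set. \<exists>\<alpha>>0. preserves_rat_span b (\<alpha> *\<^sub>R R)}"
proof -
  have scale: "(\<lambda>x. \<alpha> *\<^sub>R (R *v x)) = (\<lambda>x. (\<alpha> *\<^sub>R R) *v x)" for \<alpha> and R :: "real^'m^'m"
    by (simp add: scaleR_matrix_vector_assoc)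
  have "commensurate (span_over \<int> b) ((\<lambda>x. \<alpha> *\<^sub>R (R *v x)) ` span_over \<int> b)
      \<longleftrightarrow> preserves_rat_span b (\<alpha> *\<^sub>R R)" for \<alpha> R
    unfolding scale preserves_rat_span_def
      Ints.matrix_image_span_over Rats.matrix_image_span_over commensurate_span_over_iff by auto
  then show ?thesis unfolding SOS_def by auto
qed

lemma SOC_subset_SOS: "SOC (span_over \<int> b) \<subseteq> SOS (span_over \<int> b)"
  unfolding SOC_span_over SOS_span_over by (auto intro: exI[of _ 1])

lemma SOS_mult:
  assumes "R \<in> SOS (span_over \<int> b)" "T \<in> SOS (span_over \<int> b)"
  shows "R ** T \<in> SOS (span_over \<int> b)"
proof -
  obtain \<alpha> \<beta> where "0 < \<alpha>" "preserves_rat_span b (\<alpha> *\<^sub>R R)" "0 < \<beta>" "preserves_rat_span b (\<beta> *\<^sub>R T)"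
    using assms by (auto simp: SOS_span_over)
  then have "0 < \<alpha> * \<beta>" "preserves_rat_span b ((\<alpha> * \<beta>) *\<^sub>R (R ** T))"
    using preserves_rat_span_mult by (auto simp flip: scaleR_matrix_mul_scaleR)
  then show ?thesis using assms by (auto simp: SOS_span_over SO_set_mult)
qed

lemma SOS_transpose:
  assumes "R \<in> SOS (span_over \<int> b)" shows "transpose R \<in> SOS (span_over \<int> b)"
proof -
  obtain \<alpha> where "R \<in> SO_set" "0 < \<alpha>" "preserves_rat_span b (\<alpha> *\<^sub>R R)"
    using assms by (auto simp: SOS_span_over)
  then have "0 < inverse \<alpha>" "preserves_rat_span b (inverse \<alpha> *\<^sub>R transpose R)"
    using preserves_rat_span_inverse_scaled by auto
  moreover have "transpose R \<in> SO_set" using \<open>R \<in> SO_set\<close> by (rule SO_set_transpose)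
  ultimately show ?thesis unfolding SOS_span_over by blast
qed

lemma SOS_subset_SO_set: "SOS L \<subseteq> SO_set"
  by (auto simp: SOS_def)

lemma mat_1_in_SOS: "mat 1 \<in> SOS (span_over \<int> b)"
  using SOC_subset_SOS[of b] mat_1_in_SO_set preserves_rat_span_one by (auto simp: SOC_span_over)

lemma group_SOS: "group (SO_subgroup (SOS (span_over \<int> b)))"
  by (rule group_SO_subgroup[OF SOS_subset_SO_set mat_1_in_SOS SOS_mult SOS_transpose])

lemma inv_SOS: "R \<in> SOS (span_over \<int> b) \<Longrightarrow> inv\<^bsub>SO_subgroup (SOS (span_over \<int> b))\<^esub> R = transpose R"
  by (rule inv_SO_subgroup[OF SOS_subset_SO_set mat_1_in_SOS SOS_mult SOS_transpose])


lemma SOC_subgroup_SOS: "subgroup (SOC (span_over \<int> b)) (SO_subgroup (SOS (span_over \<int> b)))"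
proof (rule group.subgroupI[OF group_SOS])
  show "SOC (span_over \<int> b) \<subseteq> carrier (SO_subgroup (SOS (span_over \<int> b)))"
    using SOC_subset_SOS by (simp add: SO_subgroup_def)
  show "SOC (span_over \<int> b) \<noteq> {}"
    using mat_1_in_SO_set preserves_rat_span_one by (auto simp: SOC_span_over)
next
  fix R assume R: "R \<in> SOC (span_over \<int> b)"
  then have "preserves_rat_span b (transpose R)" "transpose R \<in> SO_set"
    using preserves_rat_span_left_inverse SO_set_transpose_mult SO_set_transpose
    by (auto simp: SOC_span_over)
  moreover have "inv\<^bsub>SO_subgroup (SOS (span_over \<int> b))\<^esub> R = transpose R"
    using R SOC_subset_SOS by (intro inv_SOS) blast
  ultimately show "inv\<^bsub>SO_subgroup (SOS (span_over \<int> b))\<^esub> R \<in> SOC (span_over \<int> b)"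
    by (simp add: SOC_span_over)
next
  fix R T assume "R \<in> SOC (span_over \<int> b)" "T \<in> SOC (span_over \<int> b)"
  then show "R \<otimes>\<^bsub>SO_subgroup (SOS (span_over \<int> b))\<^esub> T \<in> SOC (span_over \<int> b)"
    by (auto simp: SOC_span_over SO_subgroup_def SO_set_mult preserves_rat_span_mult)
qed

lemma obtain_SOS_scale:
  assumes "R \<in> SOS (span_over \<int> b)"
  obtains \<alpha> where "0 < \<alpha>" "R \<in> SO_set" "preserves_rat_span b (\<alpha> *\<^sub>R R)"
    "preserves_rat_span b (inverse \<alpha> *\<^sub>R transpose R)"
  using assms preserves_rat_span_inverse_scaled by (auto simp: SOS_span_over)

lemma SOS_conjugate_in_SOC:
  assumes "R \<in> SOS (span_over \<int> b)" "H \<in> SOC (span_over \<int> b)"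
  shows "R ** H ** transpose R \<in> SOC (span_over \<int> b)"
proof -
  obtain \<alpha> where \<alpha>: "0 < \<alpha>" "R \<in> SO_set" "preserves_rat_span b (\<alpha> *\<^sub>R R)"
    "preserves_rat_span b (inverse \<alpha> *\<^sub>R transpose R)"
    using assms(1) by (rule obtain_SOS_scale)
  have H: "H \<in> SO_set" "preserves_rat_span b H" using assms(2) by (auto simp: SOC_span_over)
  have "(\<alpha> *\<^sub>R R) ** H ** (inverse \<alpha> *\<^sub>R transpose R) = R ** H ** transpose R"
    using \<alpha>(1) by (simp add: matrix_scalar_ac scalar_matrix_assoc[symmetric])
  then have "preserves_rat_span b (R ** H ** transpose R)"
    using preserves_rat_span_mult \<alpha>(3,4) H(2) by metis
  then show ?thesis using \<alpha>(2) H(1) by (auto simp: SOC_span_over SO_set_mult SO_set_transpose)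
qed

lemma SOC_normal_SOS: "SOC (span_over \<int> b) \<lhd> SO_subgroup (SOS (span_over \<int> b))"
proof (rule group.normal_invI[OF group_SOS SOC_subgroup_SOS])
  fix R H assume R: "R \<in> carrier (SO_subgroup (SOS (span_over \<int> b)))" and H: "H \<in> SOC (span_over \<int> b)"
  then have "inv\<^bsub>SO_subgroup (SOS (span_over \<int> b))\<^esub> R = transpose R"
    by (intro inv_SOS) (simp add: SO_subgroup_def)
  then show "R \<otimes>\<^bsub>SO_subgroup (SOS (span_over \<int> b))\<^esub> H
      \<otimes>\<^bsub>SO_subgroup (SOS (span_over \<int> b))\<^esub> inv\<^bsub>SO_subgroup (SOS (span_over \<int> b))\<^esub> R
      \<in> SOC (span_over \<int> b)"
    using SOS_conjugate_in_SOC R H by (simp add: SO_subgroup_def)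
qed

lemma SOS_commutator_in_SOC:
  assumes "R \<in> SOS (span_over \<int> b)" "T \<in> SOS (span_over \<int> b)"
  shows "R ** T ** transpose R ** transpose T \<in> SOC (span_over \<int> b)"
proof -
  obtain \<alpha> where \<alpha>: "0 < \<alpha>" "R \<in> SO_set" "preserves_rat_span b (\<alpha> *\<^sub>R R)"
    "preserves_rat_span b (inverse \<alpha> *\<^sub>R transpose R)"
    using assms(1) by (rule obtain_SOS_scale)
  obtain \<beta> where \<beta>: "0 < \<beta>" "T \<in> SO_set" "preserves_rat_span b (\<beta> *\<^sub>R T)"
    "preserves_rat_span b (inverse \<beta> *\<^sub>R transpose T)"
    using assms(2) by (rule obtain_SOS_scale)
  have "(\<alpha> *\<^sub>R R) ** (\<beta> *\<^sub>R T) ** (inverse \<alpha> *\<^sub>R transpose R) ** (inverse \<beta> *\<^sub>R transpose T)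
      = R ** T ** transpose R ** transpose T"
  proof -
    have "\<alpha> * \<beta> * inverse \<alpha> * inverse \<beta> = 1" using \<alpha>(1) \<beta>(1) by (simp add: field_simps)
    then show ?thesis by (simp add: scaleR_matrix_mul_scaleR)
  qed
  then have "preserves_rat_span b (R ** T ** transpose R ** transpose T)"
    using preserves_rat_span_mult \<alpha>(3,4) \<beta>(3,4) by metis
  then show ?thesis using \<alpha>(2) \<beta>(2) by (auto simp: SOC_span_over SO_set_mult SO_set_transpose)
qed

lemma basis_coeffs_eq_zero:
  fixes b :: "'i::finite \<Rightarrow> real^'m"
  assumes "inj b" "independent (range b)" "(\<Sum>i\<in>UNIV. x i *\<^sub>R b i) = 0"
  shows "x i = 0"
proof -
  define c where "c v = x (inv_into UNIV b v)" for v
  have "(\<Sum>v\<in>range b. c v *\<^sub>R v) = (\<Sum>i\<in>UNIV. c (b i) *\<^sub>R b i)"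
    using assms(1) by (simp add: sum.reindex)
  also have "\<dots> = 0" using assms(1,3) by (simp add: c_def)
  finally have "\<forall>v\<in>range b. c v = 0" using assms(2) unfolding independent_explicit by blast
  then show ?thesis using assms(1) by (auto simp: c_def)
qed

lemma det_rows_basis_nonzero:
  fixes b :: "'n::finite \<Rightarrow> real^'n"
  assumes "inj b" "independent (range b)"
  shows "det (\<chi> i. b i) \<noteq> 0"
proof -
  have "transpose (\<chi> i. b i) *v v = (\<Sum>i\<in>UNIV. (v$i) *\<^sub>R b i)" for v :: "real^'n"
    by (simp add: matrix_mult_sum row_def scalar_mult_eq_scaleR)
  then have "transpose (\<chi> i. b i) *v v = 0 \<Longrightarrow> v = 0" for v
    using basis_coeffs_eq_zero[OF assms] by (auto simp: vec_eq_iff)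
  then obtain B :: "real^'n^'n" where "B ** transpose (\<chi> i. b i) = mat 1"
    using matrix_left_invertible_ker by blast
  then have "det (transpose (\<chi> i. b i)) \<noteq> 0"
    using invertible_left_inverse invertible_det_nz by blast
  then show ?thesis by simp
qed



lemma preserves_rat_span_rational_conj:
  fixes b :: "'n::finite \<Rightarrow> real^'n"
  assumes "preserves_rat_span b M"
  shows "\<exists>A::real^'n^'n. (\<forall>i j. A$i$j \<in> \<rat>) \<and> (\<chi> i. b i) ** transpose M = A ** (\<chi> i. b i)"
proof -
  have "M *v b j \<in> span_over \<rat> b" for j
    using assms Rats.span_over_basis[of b j] unfolding preserves_rat_span_def by blast
  then have "\<exists>a. (\<forall>i. a i \<in> \<rat>) \<and> M *v b j = (\<Sum>i\<in>UNIV. a i *\<^sub>R b i)" for j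
    unfolding span_over_def by blast
  then obtain a where a: "\<And>j. \<forall>i. a j i \<in> \<rat>" "\<And>j. M *v b j = (\<Sum>i\<in>UNIV. a j i *\<^sub>R b i)"
    by metis
  define A :: "real^'n^'n" where "A = (\<chi> j i. a j i)"
  have "((\<chi> i. b i) ** transpose M) $ j $ l = (A ** (\<chi> i. b i)) $ j $ l" for j l
  proof -
    have "((\<chi> i. b i) ** transpose M) $ j $ l = (M *v b j) $ l"
      by (simp add: matrix_matrix_mult_def matrix_vector_mult_def transpose_def mult.commute)
    also have "\<dots> = (A ** (\<chi> i. b i)) $ j $ l"
      using a(2)[of j] by (simp add: matrix_matrix_mult_def A_def)
    finally show ?thesis .
  qed
  then show ?thesis using a(1) by (intro exI[of _ A]) (simp add: A_def vec_eq_iff)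
qed

lemma det_Rats: "(\<And>i j. A$i$j \<in> \<rat>) \<Longrightarrow> det (A::real^'n^'n) \<in> \<rat>"
  unfolding det_def by (intro Rats_sum Rats_mult Rats_prod) auto

lemma det_scaleR: "det (c *\<^sub>R A) = c ^ CARD('n) * det (A::real^'n^'n)"
proof -
  have "c *\<^sub>R A = (\<chi> i. c *s (A$i))" by (simp add: vec_eq_iff scalar_mult_eq_scaleR)
  then show ?thesis by (simp add: det_rows_mul)
qed

lemma det_preserves_rat_span_Rats:
  fixes b :: "'n::finite \<Rightarrow> real^'n"
  assumes "inj b" "independent (range b)" "preserves_rat_span b M"
  shows "det M \<in> \<rat>"
proof -
  obtain A where A: "\<forall>i j. A$i$j \<in> \<rat>" "(\<chi> i. b i) ** transpose M = A ** (\<chi> i. b i)"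
    using preserves_rat_span_rational_conj[OF assms(3)] by blast
  have "det (\<chi> i. b i) * det M = det A * det (\<chi> i. b i)"
    using arg_cong[OF A(2), of det] by (simp add: det_mul)
  then have "det M = det A" using det_rows_basis_nonzero[OF assms(1,2)] by simp
  then show ?thesis using det_Rats A(1) by metis
qed

lemma preserves_rat_span_scaled_nat_pow:
  assumes "preserves_rat_span b (\<alpha> *\<^sub>R R)"
  shows "preserves_rat_span b ((\<alpha> ^ k) *\<^sub>R (R [^]\<^bsub>SO_subgroup S\<^esub> k))"
proof (induction k)
  case 0
  then show ?case by (simp add: SO_subgroup_def preserves_rat_span_one)
next
  case (Suc k)
  have "(\<alpha> ^ Suc k) *\<^sub>R (R [^]\<^bsub>SO_subgroup S\<^esub> Suc k)
      = ((\<alpha> ^ k) *\<^sub>R (R [^]\<^bsub>SO_subgroup S\<^esub> k)) ** (\<alpha> *\<^sub>R R)"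
    by (simp add: SO_subgroup_def scaleR_matrix_mul_scaleR mult.commute)
  then show ?case using preserves_rat_span_mult[OF Suc assms] by simp
qed

lemma SOS_nat_pow_card_in_SOC:
  fixes b :: "'n::finite \<Rightarrow> real^'n"
  assumes b: "inj b" "independent (range b)" and R: "R \<in> SOS (span_over \<int> b)"
  shows "R [^]\<^bsub>SO_subgroup (SOS (span_over \<int> b))\<^esub> CARD('n) \<in> SOC (span_over \<int> b)"
proof -
  obtain \<alpha> where \<alpha>: "0 < \<alpha>" "R \<in> SO_set" "preserves_rat_span b (\<alpha> *\<^sub>R R)"
    using R by (rule obtain_SOS_scale)
  \<comment> \<open>\<open>\<alpha>\<^sup>d = det (\<alpha> R)\<close> is rational, so \<open>(\<alpha> R)\<^sup>d\<close> may be rescaled to \<open>R\<^sup>d\<close>\<close>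
  have "\<alpha> ^ CARD('n) \<in> \<rat>"
    using det_preserves_rat_span_Rats[OF b \<alpha>(3)] \<alpha>(2) by (simp add: det_scaleR SO_set_def)
  then have "preserves_rat_span b
      (inverse (\<alpha> ^ CARD('n)) *\<^sub>R ((\<alpha> ^ CARD('n)) *\<^sub>R (R [^]\<^bsub>SO_subgroup (SOS (span_over \<int> b))\<^esub> CARD('n))))"
    using \<alpha>(1) by (intro preserves_rat_span_scaleR preserves_rat_span_scaled_nat_pow \<alpha>(3)) auto
  then have "preserves_rat_span b (R [^]\<^bsub>SO_subgroup (SOS (span_over \<int> b))\<^esub> CARD('n))"
    using \<alpha>(1) by simp
  moreover have "R [^]\<^bsub>SO_subgroup (SOS (span_over \<int> b))\<^esub> CARD('n) \<in> SOS (span_over \<int> b)"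
    using monoid.nat_pow_closed[OF group.is_monoid[OF group_SOS]] R by (simp add: SO_subgroup_def)
  ultimately show ?thesis using SOS_subset_SO_set by (auto simp: SOC_span_over)
qed

lemma countable_SOS:
  fixes b :: "'n::finite \<Rightarrow> real^'n"
  assumes b: "inj b" "independent (range b)"
  shows "countable (SOS (span_over \<int> b))"
proof -
  define B :: "real^'n^'n" where "B = (\<chi> i. b i)"
  obtain B' where B': "B' ** B = mat 1"
    using det_rows_basis_nonzero[OF b] invertible_det_nz invertible_left_inverse unfolding B_def by blast
  define f where "f A = inverse (root CARD('n) (det (transpose (B' ** A ** B)))) *\<^sub>R transpose (B' ** A ** B)"
    for A :: "real^'n^'n"
  \<comment> \<open>\<open>R\<close> is recovered from the rational matrix of \<open>\<alpha> R\<close> by normalising its determinant to 1\<close>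
  have "SOS (span_over \<int> b) \<subseteq> f ` {A. \<forall>i j. A$i$j \<in> \<rat>}"
  proof
    fix R assume "R \<in> SOS (span_over \<int> b)"
    then obtain \<alpha> where \<alpha>: "0 < \<alpha>" "R \<in> SO_set" "preserves_rat_span b (\<alpha> *\<^sub>R R)"
      by (rule obtain_SOS_scale)
    then obtain A where A: "\<forall>i j. A$i$j \<in> \<rat>" "B ** transpose (\<alpha> *\<^sub>R R) = A ** B"
      using preserves_rat_span_rational_conj unfolding B_def by blast
    have "transpose (\<alpha> *\<^sub>R R) = B' ** A ** B"
      using arg_cong[OF A(2), of "\<lambda>X. B' ** X"] by (simp add: matrix_mul_assoc B')
    then have "transpose (B' ** A ** B) = \<alpha> *\<^sub>R R" by (metis transpose_transpose)
    moreover have "root CARD('n) (det (\<alpha> *\<^sub>R R)) = \<alpha>"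
      using \<alpha>(1,2) by (simp add: det_scaleR SO_set_def real_root_power_cancel)
    ultimately have "f A = R" using \<alpha>(1) by (simp add: f_def)
    then show "R \<in> f ` {A. \<forall>i j. A$i$j \<in> \<rat>}" using A(1) by blast
  qed
  moreover have "countable {A :: real^'n^'n. \<forall>i j. A$i$j \<in> \<rat>}"
    using countable_vector[OF countable_vector, of "\<lambda>i j. \<rat>"] by (simp add: countable_rat)
  ultimately show ?thesis by (meson countable_image countable_subset)
qed

lemma comm_group_SOS_Mod_SOC: "comm_group (SO_subgroup (SOS (span_over \<int> b)) Mod SOC (span_over \<int> b))"
proof (rule group.comm_group_FactGroup[OF group_SOS SOC_normal_SOS])
  let ?G = "SO_subgroup (SOS (span_over \<int> b))"
  have inv: "inv\<^bsub>?G\<^esub> X = transpose X" if "X \<in> carrier ?G" for X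
    using that by (intro inv_SOS) (simp add: SO_subgroup_def)
  fix R T assume "R \<in> carrier ?G" "T \<in> carrier ?G"
  then show "R \<otimes>\<^bsub>?G\<^esub> T \<otimes>\<^bsub>?G\<^esub> inv\<^bsub>?G\<^esub> R \<otimes>\<^bsub>?G\<^esub> inv\<^bsub>?G\<^esub> T \<in> SOC (span_over \<int> b)"
    using inv SOS_commutator_in_SOC by (simp add: SO_subgroup_def)
qed

lemma countable_SOS_Mod_SOC:
  fixes b :: "'n::finite \<Rightarrow> real^'n"
  assumes "inj b" "independent (range b)"
  shows "countable (carrier (SO_subgroup (SOS (span_over \<int> b)) Mod SOC (span_over \<int> b)))"
  using countable_SOS[OF assms] unfolding carrier_FactGroup by (simp add: SO_subgroup_def)

lemma SOS_Mod_SOC_nat_pow_card: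
  fixes b :: "'n::finite \<Rightarrow> real^'n"
  assumes "inj b" "independent (range b)"
    and "X \<in> carrier (SO_subgroup (SOS (span_over \<int> b)) Mod SOC (span_over \<int> b))"
  shows "X [^]\<^bsub>SO_subgroup (SOS (span_over \<int> b)) Mod SOC (span_over \<int> b)\<^esub> CARD('n)
    = \<one>\<^bsub>SO_subgroup (SOS (span_over \<int> b)) Mod SOC (span_over \<int> b)\<^esub>"
  using normal.FactGroup_nat_pow_eq_one[OF SOC_normal_SOS _ assms(3)] SOS_nat_pow_card_in_SOC[OF assms(1,2)]
  by (simp add: SO_subgroup_def)

lemma is_lattice_obtain_basis:
  assumes "is_lattice L"
  obtains b :: "'n::finite \<Rightarrow> real^'n" where "inj b" "independent (range b)" "L = span_over \<int> b"
  using assms unfolding is_lattice_def span_over_Ints_eq_range by blast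

theorem mainTheorem3:
  fixes L :: "(real^'n) set"
  assumes "CARD('n) \<ge> 2"
    and "is_lattice L"
  shows "SOC L \<lhd> SO_subgroup (SOS L)
       \<and> countable (carrier (SO_subgroup (SOS L) Mod SOC L))
       \<and> (\<exists>(I :: nat set) (n :: nat \<Rightarrow> nat).
            (\<forall>i\<in>I. (\<exists>p k. prime p \<and> k \<ge> 1 \<and> n i = p ^ k) \<and> n i dvd CARD('n))
          \<and> SO_subgroup (SOS L) Mod SOC L \<cong> sum_group I (\<lambda>i. integer_mod_group (n i)))"
proof -
  obtain b :: "'n \<Rightarrow> real^'n" where b: "inj b" "independent (range b)" and L: "L = span_over \<int> b"
    using assms(2) by (rule is_lattice_obtain_basis)
  let ?Q = "SO_subgroup (SOS L) Mod SOC L"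
  have comm: "comm_group ?Q" and countable: "countable (carrier ?Q)"
    and exp: "\<And>X. X \<in> carrier ?Q \<Longrightarrow> X [^]\<^bsub>?Q\<^esub> CARD('n) = \<one>\<^bsub>?Q\<^esub>"
    unfolding L using comm_group_SOS_Mod_SOC countable_SOS_Mod_SOC[OF b] SOS_Mod_SOC_nat_pow_card[OF b]
    by auto
  obtain I :: "nat set" and n where
    "\<forall>i\<in>I. primepow (n i) \<and> n i dvd CARD('n)" "?Q \<cong> sum_group I (\<lambda>i. integer_mod_group (n i))"
    using comm_group.countable_bounded_iso_sum_cyclic[OF comm countable _ exp] by auto
  then show ?thesis
    using SOC_normal_SOS countable unfolding L primepow_def by (auto simp: Suc_le_eq)
qed
end
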